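(* Let $\xi\in G$ be $\pi_p$-contracting and $b\in Z^1(G,\pi_p)$. Then there exists $c\in Z^1(G,\pi_p)$ with $b-c\in B^1(G,\pi_p)$ and $c(\xi)=0$.
   Context: $G$ is a locally compact second countable group with left Haar measure; $(\pi_0,V)$ is a continuous representation of $G$ on a separable Banach space $V$; for $p>1$, $\pi_p$ acts on the Bochner space $L^p(G,V)$ by $(\pi(g)f)(h)=\pi_0(g)(f(hg))$. $Z^1(G,\pi_p)$ is the space of continuous $b:G\to L^p(G,V)$ with $b(gh)=b(g)+\pi(g)b(h)$, and $B^1(G,\pi_p)=\{g\mapsto f-\pi(g)f:f\in L^p(G,V)\}$. $\xi$ is $\pi_p$-contracting if $\lim_{n\to\infty}|||\pi(\xi^n)|||_{L^p(G,V)}=0$. *)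

theory Defs
  imports "HOL-Analysis.Analysis"
begin

text \<open>The (possibly non-abelian) group G is a type of class
 topological_group_add, written additively: the product gh is written g + h,
 the identity is 0. Elements of the Bochner space L^p(G,V) are represented by
 Borel measurable functions G \<Rightarrow> V with p-integrable norm; equality in L^p
 is equality almost everywhere.\<close>

definition lcsc_group :: "'g::{topological_group_add,t2_space,second_countable_topology} itself \<Rightarrow> bool" where
  "lcsc_group _ \<longleftrightarrow> locally_compact_space (euclidean :: 'g topology)"

text \<open>Left Haar measure: a Borel measure, left invariant, finite on compact sets,
 positive on nonempty open sets (in an lcsc group such a measure is automatically Radon).\<close>
definition left_haar_measure :: "'g::{topological_group_add,t2_space,second_countable_topology} measure \<Rightarrow> bool" where
  "left_haar_measure \<mu> \<longleftrightarrow>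
     sets \<mu> = sets borel \<and>
     (\<forall>g A. A \<in> sets borel \<longrightarrow> emeasure \<mu> ((\<lambda>h. g + h) ` A) = emeasure \<mu> A) \<and>
     (\<forall>K. compact K \<longrightarrow> emeasure \<mu> K < \<infinity>) \<and>
     (\<forall>U. open U \<and> U \<noteq> {} \<longrightarrow> emeasure \<mu> U > 0)"

definition cont_rep :: "('g::topological_group_add \<Rightarrow> 'v::banach \<Rightarrow> 'v) \<Rightarrow> bool" where
  "cont_rep \<pi>0 \<longleftrightarrow>
     (\<forall>g. bounded_linear (\<pi>0 g)) \<and>
     \<pi>0 0 = id \<and>
     (\<forall>g h. \<pi>0 (g + h) = \<pi>0 g \<circ> \<pi>0 h) \<and>
     (\<forall>v. continuous_on UNIV (\<lambda>g. \<pi>0 g v))"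

definition Lp :: "'g measure \<Rightarrow> real \<Rightarrow> ('g \<Rightarrow> 'v::banach) set" where
  "Lp \<mu> p = {f. f \<in> borel_measurable \<mu> \<and> integrable \<mu> (\<lambda>x. norm (f x) powr p)}"

definition Lp_norm :: "'g measure \<Rightarrow> real \<Rightarrow> ('g \<Rightarrow> 'v::banach) \<Rightarrow> real" where
  "Lp_norm \<mu> p f = (\<integral>x. norm (f x) powr p \<partial>\<mu>) powr (1 / p)"

definition pi_p :: "('g::group_add \<Rightarrow> 'v \<Rightarrow> 'v) \<Rightarrow> 'g \<Rightarrow> ('g \<Rightarrow> 'v) \<Rightarrow> ('g \<Rightarrow> 'v)" where
  "pi_p \<pi>0 g f = (\<lambda>h. \<pi>0 g (f (h + g)))"

definition Lp_opnorm :: "'g measure \<Rightarrow> real \<Rightarrow> ('g::group_add \<Rightarrow> 'v::banach \<Rightarrow> 'v) \<Rightarrow> 'g \<Rightarrow> real" where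
  "Lp_opnorm \<mu> p \<pi>0 g = Sup {Lp_norm \<mu> p (pi_p \<pi>0 g f) | f. f \<in> Lp \<mu> p \<and> Lp_norm \<mu> p f \<le> 1}"

definition gpow :: "'g::group_add \<Rightarrow> nat \<Rightarrow> 'g" where
  "gpow \<xi> n = ((\<lambda>x. \<xi> + x) ^^ n) 0"

definition contracting :: "'g measure \<Rightarrow> real \<Rightarrow> ('g::group_add \<Rightarrow> 'v::banach \<Rightarrow> 'v) \<Rightarrow> 'g \<Rightarrow> bool" where
  "contracting \<mu> p \<pi>0 \<xi> \<longleftrightarrow> (\<lambda>n. Lp_opnorm \<mu> p \<pi>0 (gpow \<xi> n)) \<longlonglongrightarrow> 0"

definition Z1 :: "'g measure \<Rightarrow> real \<Rightarrow> ('g::topological_group_add \<Rightarrow> 'v::banach \<Rightarrow> 'v) \<Rightarrow> ('g \<Rightarrow> 'g \<Rightarrow> 'v) set" where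
  "Z1 \<mu> p \<pi>0 = {b.
     (\<forall>g. b g \<in> Lp \<mu> p) \<and>
     (\<forall>g0. ((\<lambda>g. Lp_norm \<mu> p (\<lambda>x. b g x - b g0 x)) \<longlongrightarrow> 0) (at g0)) \<and>
     (\<forall>g h. AE x in \<mu>. b (g + h) x = b g x + pi_p \<pi>0 g (b h) x)}"

definition B1 :: "'g measure \<Rightarrow> real \<Rightarrow> ('g::group_add \<Rightarrow> 'v::banach \<Rightarrow> 'v) \<Rightarrow> ('g \<Rightarrow> 'g \<Rightarrow> 'v) set" where
  "B1 \<mu> p \<pi>0 = {b. \<exists>f \<in> Lp \<mu> p. \<forall>g. AE x in \<mu>. b g x = f x - pi_p \<pi>0 g f x}"

end

theory Submission
  imports Defs
begin

text \<open>Choose \<open>n\<close> with \<open>\<parallel>\<pi>(\<xi>\<^sup>n)\<parallel> < 1/4\<close> and put \<open>\<gamma> = \<xi>\<^sup>n\<close>. The cocycle identity telescopes to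
  \<open>b(\<gamma>\<^sup>K) = \<Sum>\<^sub>k\<^sub><\<^sub>K \<pi>(\<gamma>\<^sup>k) b(\<gamma>)\<close>, and since \<open>\<pi>(\<gamma>)\<close> contracts, these partial sums converge in \<open>L\<^sup>p\<close>
  to some \<open>f\<close> (\<open>b_lim\<close> below). The cocycle \<open>c(g) = b(g) - f + \<pi>(g) f\<close> is cohomologous to \<open>b\<close>, and for every \<open>K\<close>
  \<open>c(g) = [b(g\<gamma>\<^sup>K) - b(\<gamma>\<^sup>K)] + (\<pi>(g) - 1)(f - b(\<gamma>\<^sup>K))\<close>.
  For \<open>g = \<xi>\<close>, which commutes with \<open>\<gamma>\<close>, the first bracket is \<open>\<pi>(\<gamma>\<^sup>K) b(\<xi>)\<close>; both brackets tend
  to \<open>0\<close> as \<open>K \<rightarrow> \<infinity>\<close>, so \<open>c(\<xi>) = 0\<close>. The same identity yields continuity of \<open>c\<close>, because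
  \<open>\<pi>(g)\<close> is bounded on \<open>L\<^sup>p\<close> locally uniformly in \<open>g\<close>: for \<open>\<pi>\<^sub>0\<close> by the uniform boundedness
  principle, for right translations by local boundedness of the modular function.\<close>

section \<open>Left Haar measures\<close>

lemma lcsc_compact_neighbourhood:
  fixes x :: "'g::{topological_group_add,t2_space,second_countable_topology}"
  assumes "lcsc_group TYPE('g)"
  obtains U K where "open U" "compact K" "x \<in> U" "U \<subseteq> K"
  using assms unfolding lcsc_group_def locally_compact_space_def
  by (simp add: compactin_euclidean_iff) blast

lemma vimage_add_left_eq_image:
  fixes g :: "'a::group_add"
  shows "(\<lambda>x. g + x) -` A = (\<lambda>x. - g + x) ` A"
proof (intro set_eqI iffI)
  fix x assume "x \<in> (\<lambda>x. g + x) -` A"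
  moreover have "x = - g + (g + x)" by (simp add: add.assoc[symmetric])
  ultimately show "x \<in> (\<lambda>x. - g + x) ` A" by blast
qed (auto simp: add.assoc[symmetric])

lemma vimage_add_right_eq_image:
  fixes g :: "'a::group_add"
  shows "(\<lambda>x. x + g) -` A = (\<lambda>x. x - g) ` A"
proof (intro set_eqI iffI)
  fix x assume "x \<in> (\<lambda>x. x + g) -` A"
  moreover have "x = (x + g) - g" by simp
  ultimately show "x \<in> (\<lambda>x. x - g) ` A" by blast
qed auto

lemma borel_measurable_uminus_group[measurable (raw)]:
  fixes f :: "'a \<Rightarrow> 'b::{second_countable_topology,topological_group_add}"
  assumes "f \<in> borel_measurable M"
  shows "(\<lambda>x. - f x) \<in> borel_measurable M"
  by (rule borel_measurable_continuous_on[OF _ assms]) (intro continuous_intros)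

context
  fixes \<mu> :: "'g::{topological_group_add,t2_space,second_countable_topology} measure"
  assumes haar: "left_haar_measure \<mu>"
begin

lemma sets_left_haar: "sets \<mu> = sets borel"
  using haar by (simp add: left_haar_measure_def)

lemma space_left_haar: "space \<mu> = UNIV"
  using sets_eq_imp_space_eq[OF sets_left_haar] by simp

lemma measurable_left_haar_iff: "f \<in> measurable \<mu> N \<longleftrightarrow> f \<in> measurable borel N"
  by (simp add: measurable_cong_sets[OF sets_left_haar refl])

lemma emeasure_left_haar_compact: "compact K \<Longrightarrow> emeasure \<mu> K < \<infinity>"
  using haar unfolding left_haar_measure_def by blast

lemma emeasure_left_haar_open_pos: "open U \<Longrightarrow> U \<noteq> {} \<Longrightarrow> 0 < emeasure \<mu> U"
  using haar unfolding left_haar_measure_def by blast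

lemma sigma_finite_left_haar:
  assumes lc: "lcsc_group TYPE('g)"
  shows "sigma_finite_measure \<mu>"
proof -
  obtain \<B> :: "'g set set" where cB: "countable \<B>" and basis: "topological_basis \<B>"
    using ex_countable_basis by blast
  define A where "A = {B\<in>\<B>. \<exists>K. compact K \<and> B \<subseteq> K}"
  have "countable A" using cB unfolding A_def by simp
  moreover have "A \<subseteq> sets \<mu>"
    using basis sets_left_haar unfolding A_def by (auto simp: topological_basis_open)
  moreover have "\<Union>A = space \<mu>"
  proof -
    have "x \<in> \<Union>A" for x
    proof -
      obtain U K where UK: "open U" "compact K" "x \<in> U" "U \<subseteq> K"
        using lcsc_compact_neighbourhood[OF lc] by blast
      then obtain B where "B \<in> \<B>" "x \<in> B" "B \<subseteq> U"
        using basis by (meson topological_basisE)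
      then show ?thesis using UK unfolding A_def by blast
    qed
    then show ?thesis using space_left_haar by auto
  qed
  moreover have "\<forall>a\<in>A. emeasure \<mu> a \<noteq> \<infinity>"
  proof
    fix a assume "a \<in> A"
    then obtain K where K: "compact K" "a \<subseteq> K" "a \<in> \<B>" unfolding A_def by auto
    have "a \<in> sets \<mu>" "K \<in> sets \<mu>"
      using K basis sets_left_haar by (auto simp: topological_basis_open compact_imp_closed)
    then have "emeasure \<mu> a \<le> emeasure \<mu> K" using K by (simp add: emeasure_mono)
    also have "\<dots> < \<infinity>" using K(1) by (rule emeasure_left_haar_compact)
    finally show "emeasure \<mu> a \<noteq> \<infinity>" by simp
  qed
  ultimately show ?thesis unfolding sigma_finite_measure_def by blast
qed

lemma distr_left_haar_left_translation: "distr \<mu> borel (\<lambda>x. y + x) = \<mu>"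
proof (rule measure_eqI)
  show "sets (distr \<mu> borel (\<lambda>x. y + x)) = sets \<mu>" using sets_left_haar by simp
  fix A assume "A \<in> sets (distr \<mu> borel (\<lambda>x. y + x))"
  then have A: "A \<in> sets borel" by simp
  have "(\<lambda>x. y + x) \<in> measurable \<mu> borel" by (simp add: measurable_left_haar_iff)
  moreover have "(\<lambda>x. y + x) -` A \<inter> space \<mu> = (\<lambda>x. -y + x) ` A"
    by (simp add: space_left_haar vimage_add_left_eq_image)
  ultimately show "emeasure (distr \<mu> borel (\<lambda>x. y + x)) A = emeasure \<mu> A"
    using haar A unfolding left_haar_measure_def by (simp add: emeasure_distr)
qed

lemma nn_integral_left_translation:
  assumes "f \<in> borel_measurable borel"
  shows "(\<integral>\<^sup>+x. f (y + x) \<partial>\<mu>) = (\<integral>\<^sup>+x. f x \<partial>\<mu>)"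
proof -
  have "(\<integral>\<^sup>+x. f x \<partial>\<mu>) = (\<integral>\<^sup>+x. f x \<partial>distr \<mu> borel (\<lambda>x. y + x))"
    by (simp add: distr_left_haar_left_translation)
  also have "\<dots> = (\<integral>\<^sup>+x. f (y + x) \<partial>\<mu>)"
    using assms by (simp add: nn_integral_distr measurable_left_haar_iff)
  finally show ?thesis ..
qed

lemma right_translate_preimage_sets:
  assumes "A \<in> sets borel"
  shows "{x. x + g \<in> A} \<in> sets \<mu>"
proof -
  have "(\<lambda>x. x + g) \<in> borel_measurable \<mu>" by (simp add: measurable_left_haar_iff)
  from measurable_sets[OF this assms] show ?thesis by (simp add: vimage_def space_left_haar)
qed

lemma emeasure_right_translate_preimage:
  assumes "A \<in> sets borel"
  shows "emeasure \<mu> {x. x + g \<in> A} = (\<integral>\<^sup>+x. indicator A (x + g) \<partial>\<mu>)"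
  using right_translate_preimage_sets[OF assms]
  by (simp add: nn_integral_indicator[symmetric] del: nn_integral_indicator)
    (auto intro!: nn_integral_cong simp: indicator_def)

lemma emeasure_right_translate_compact_bounds:
  assumes "compact K" "open U" "0 \<in> U" "U \<subseteq> K"
  shows "0 < emeasure \<mu> {x. x + y \<in> K}" "emeasure \<mu> {x. x + y \<in> K} < \<infinity>"
proof -
  have "{x. x + y \<in> K} = (\<lambda>x. x - y) ` K"
    using vimage_add_right_eq_image[of y K] by (simp add: vimage_def)
  moreover have "compact ((\<lambda>x. x - y) ` K)"
    by (rule compact_continuous_image[OF _ assms(1)]) (intro continuous_intros)
  ultimately have K': "compact {x. x + y \<in> K}" by simp
  then show "emeasure \<mu> {x. x + y \<in> K} < \<infinity>" by (rule emeasure_left_haar_compact)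
  have "continuous_on UNIV (\<lambda>x. x + y)" by (intro continuous_intros)
  then have "open ((\<lambda>x. x + y) -` U)" using assms(2) by (simp add: continuous_on_open_vimage)
  moreover have "-y \<in> (\<lambda>x. x + y) -` U" using assms(3) by simp
  ultimately have "0 < emeasure \<mu> ((\<lambda>x. x + y) -` U)" by (intro emeasure_left_haar_open_pos) blast+
  also have "\<dots> \<le> emeasure \<mu> {x. x + y \<in> K}"
    using assms(4) K' sets_left_haar by (intro emeasure_mono) (auto simp: compact_imp_closed)
  finally show "0 < emeasure \<mu> {x. x + y \<in> K}" .
qed

end

lemma measurable_pair_left_haar:
  fixes m n :: "'g::{topological_group_add,t2_space,second_countable_topology} measure"
  assumes "left_haar_measure m" "left_haar_measure n"
    and "F \<in> borel_measurable (borel \<Otimes>\<^sub>M borel)"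
  shows "F \<in> borel_measurable (m \<Otimes>\<^sub>M n)"
proof -
  have "sets (m \<Otimes>\<^sub>M n) = sets (borel \<Otimes>\<^sub>M borel)"
    using assms(1,2) by (intro sets_pair_measure_cong) (auto simp: sets_left_haar)
  then show ?thesis using assms(3) measurable_cong_sets by blast
qed

text \<open>Fubini together with left invariance in both variables, applied to
  \<open>f (-v + u) * indicator E v\<close>: first substitute \<open>u \<mapsto> v + u\<close>, then \<open>v \<mapsto> u + v\<close>.\<close>

lemma left_haar_Fubini_identity:
  fixes m n :: "'g::{topological_group_add,t2_space,second_countable_topology} measure"
  assumes lc: "lcsc_group TYPE('g)" and hm: "left_haar_measure m" and hn: "left_haar_measure n"
    and f[measurable]: "f \<in> borel_measurable borel" and E[measurable]: "E \<in> sets borel"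
  shows "(\<integral>\<^sup>+x. f x \<partial>m) * emeasure n E = (\<integral>\<^sup>+y. f (-y) * emeasure m {x. x + y \<in> E} \<partial>n)"
proof -
  interpret P: pair_sigma_finite m n
    using sigma_finite_left_haar[OF hm lc] sigma_finite_left_haar[OF hn lc]
    by (simp add: pair_sigma_finite_def)
  have sets: "sets m = sets borel" "sets n = sets borel"
    using hm hn by (simp_all add: sets_left_haar)
  have Fubini: "(\<integral>\<^sup>+y. (\<integral>\<^sup>+x. H x y \<partial>m) \<partial>n) = (\<integral>\<^sup>+x. (\<integral>\<^sup>+y. H x y \<partial>n) \<partial>m)"
    if "case_prod H \<in> borel_measurable (borel \<Otimes>\<^sub>M borel)" for H :: "_ \<Rightarrow> _ \<Rightarrow> ennreal"
    using P.Fubini'[OF measurable_pair_left_haar[OF hm hn that]] .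
  define H where "H u v = f (-v + u) * indicator E v" for u v
  have [measurable]: "case_prod H \<in> borel_measurable (borel \<Otimes>\<^sub>M borel)"
    unfolding H_def by measurable
  have "(\<integral>\<^sup>+x. f x \<partial>m) * emeasure n E = (\<integral>\<^sup>+x. (\<integral>\<^sup>+y. f x * indicator E y \<partial>n) \<partial>m)"
    using sets by (simp add: nn_integral_cmult nn_integral_multc)
  also have "\<dots> = (\<integral>\<^sup>+y. (\<integral>\<^sup>+x. H (y + x) y \<partial>m) \<partial>n)"
    by (subst Fubini[symmetric]) (simp_all add: H_def add.assoc[symmetric])
  also have "\<dots> = (\<integral>\<^sup>+y. (\<integral>\<^sup>+x. H x y \<partial>m) \<partial>n)"
    by (rule nn_integral_cong, rule nn_integral_left_translation[OF hm]) (simp add: H_def)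
  also have "\<dots> = (\<integral>\<^sup>+x. (\<integral>\<^sup>+y. H x y \<partial>n) \<partial>m)"
    by (rule Fubini) measurable
  also have "\<dots> = (\<integral>\<^sup>+x. (\<integral>\<^sup>+y. H x (x + y) \<partial>n) \<partial>m)"
    by (rule nn_integral_cong, rule nn_integral_left_translation[OF hn, symmetric]) (simp add: H_def)
  also have "\<dots> = (\<integral>\<^sup>+y. (\<integral>\<^sup>+x. f (-y) * indicator E (x + y) \<partial>m) \<partial>n)"
    by (subst Fubini[symmetric]) (simp_all add: H_def minus_add add.assoc)
  also have "\<dots> = (\<integral>\<^sup>+y. f (-y) * emeasure m {x. x + y \<in> E} \<partial>n)"
    using sets by (simp add: emeasure_right_translate_preimage[OF hm] nn_integral_cmult)
  finally show ?thesis .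
qed

lemma measurable_emeasure_right_translate_preimage:
  fixes m :: "'g::{topological_group_add,t2_space,second_countable_topology} measure"
  assumes lc: "lcsc_group TYPE('g)" and hm: "left_haar_measure m" and K: "K \<in> sets borel"
  shows "(\<lambda>y. emeasure m {x. x + y \<in> K}) \<in> borel_measurable borel"
proof -
  interpret sigma_finite_measure m using sigma_finite_left_haar[OF hm lc] .
  have "(\<lambda>q::'g \<times> 'g. snd q + fst q) \<in> borel_measurable (borel \<Otimes>\<^sub>M borel)" by measurable
  from measurable_sets[OF this K]
  have "{q :: 'g \<times> 'g. snd q + fst q \<in> K} \<in> sets (borel \<Otimes>\<^sub>M m)"
    using hm by (simp add: vimage_def space_pair_measure sets_left_haar cong: sets_pair_measure_cong)
  from measurable_emeasure_Pair[OF this] show ?thesis by (simp add: vimage_def)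
qed

lemma emeasure_left_haar_proportional:
  fixes m n :: "'g::{topological_group_add,t2_space,second_countable_topology} measure"
  assumes lc: "lcsc_group TYPE('g)" and hm: "left_haar_measure m" and hn: "left_haar_measure n"
    and UK: "compact K" "open U" "0 \<in> U" "U \<subseteq> K" and A[measurable]: "A \<in> sets borel"
  shows "emeasure n A * emeasure m K = emeasure m A * emeasure n K"
proof -
  have K[measurable]: "K \<in> sets borel" using UK(1) by (simp add: compact_imp_closed)
  define M where "M y = emeasure m {x. x + y \<in> K}" for y
  have M: "M y \<noteq> 0" "M y \<noteq> \<infinity>" for y
    unfolding M_def using emeasure_right_translate_compact_bounds[OF hm UK, of y] by auto
  have [measurable]: "M \<in> borel_measurable borel"
    unfolding M_def by (rule measurable_emeasure_right_translate_preimage[OF lc hm K])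
  define f where "f z = indicator A (-z) / M (-z)" for z
  have f[measurable]: "f \<in> borel_measurable borel" unfolding f_def by measurable
  have "indicator A y / M y * M y = indicator A y" for y
    using M[of y] by (simp add: ennreal_divide_times ennreal_times_divide mult_divide_eq_ennreal)
  then have fM: "f (-y) * M y = indicator A y" for y unfolding f_def by simp
  have "emeasure \<nu> A = (\<integral>\<^sup>+x. f x \<partial>m) * emeasure \<nu> K" if h\<nu>: "left_haar_measure \<nu>" for \<nu>
  proof -
    have "emeasure \<nu> A = (\<integral>\<^sup>+y. indicator A y \<partial>\<nu>)" using h\<nu> by (simp add: sets_left_haar)
    also have "\<dots> = (\<integral>\<^sup>+x. f x \<partial>m) * emeasure \<nu> K"
      using left_haar_Fubini_identity[OF lc hm h\<nu> f K] fM unfolding M_def by simp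
    finally show ?thesis .
  qed
  from this[OF hn] this[OF hm] show ?thesis by (simp add: mult_ac)
qed

lemma left_haar_measure_unique:
  fixes m n :: "'g::{topological_group_add,t2_space,second_countable_topology} measure"
  assumes lc: "lcsc_group TYPE('g)" and hm: "left_haar_measure m" and hn: "left_haar_measure n"
  obtains c :: ennreal where "0 < c" "c < \<infinity>" "\<And>A. A \<in> sets borel \<Longrightarrow> emeasure n A = c * emeasure m A"
proof -
  obtain U K where UK: "open U" "compact K" "(0::'g) \<in> U" "U \<subseteq> K"
    using lcsc_compact_neighbourhood[OF lc] by blast
  have mK: "0 < emeasure m K" "emeasure m K < \<infinity>" and nK: "0 < emeasure n K" "emeasure n K < \<infinity>"
    using emeasure_right_translate_compact_bounds[OF hm UK(2,1,3,4), of 0]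
      emeasure_right_translate_compact_bounds[OF hn UK(2,1,3,4), of 0] by auto
  define c where "c = emeasure n K / emeasure m K"
  have "emeasure n A = c * emeasure m A" if "A \<in> sets borel" for A
  proof -
    have "emeasure n A = emeasure n A * emeasure m K / emeasure m K"
      using mK by (simp add: mult_divide_eq_ennreal)
    also have "\<dots> = emeasure m A * emeasure n K / emeasure m K"
      by (simp only: emeasure_left_haar_proportional[OF lc hm hn UK(2,1,3,4) that])
    also have "\<dots> = c * emeasure m A"
      using ennreal_times_divide[of "emeasure m A" "emeasure n K" "emeasure m K"]
      unfolding c_def by (simp add: mult.commute)
    finally show ?thesis .
  qed
  moreover have "0 < c" using mK nK by (simp add: c_def ennreal_zero_less_divide)
  moreover have "c < \<infinity>"
    using mK nK by (auto simp: c_def ennreal_divide_eq_top_iff less_top[symmetric])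
  ultimately show ?thesis using that by blast
qed

lemma left_haar_distr_right_translation:
  fixes \<mu> :: "'g::{topological_group_add,t2_space,second_countable_topology} measure"
  assumes h: "left_haar_measure \<mu>"
  shows "left_haar_measure (distr \<mu> borel (\<lambda>x. x + g))"
proof -
  let ?\<nu> = "distr \<mu> borel (\<lambda>x. x + g)"
  let ?s = "\<lambda>x. x - g"
  have \<nu>: "emeasure ?\<nu> A = emeasure \<mu> (?s ` A)" if "A \<in> sets borel" for A
    using that by (simp add: emeasure_distr measurable_left_haar_iff[OF h] space_left_haar[OF h]
        vimage_add_right_eq_image)
  have s_borel: "?s ` A \<in> sets borel" if "A \<in> sets borel" for A
  proof -
    have "(\<lambda>x. x + g) \<in> borel_measurable borel" by measurable
    from measurable_sets[OF this that] show ?thesis by (simp add: vimage_add_right_eq_image)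
  qed
  have "emeasure ?\<nu> ((+) k ` A) = emeasure ?\<nu> A" if A: "A \<in> sets borel" for k A
  proof -
    have "?s ` ((+) k ` A) = (+) k ` (?s ` A)" by (auto simp: image_image add_diff_eq)
    moreover have "(\<lambda>x. - k + x) \<in> borel_measurable borel" by measurable
    from measurable_sets[OF this A] have "(+) k ` A \<in> sets borel"
      by (simp add: vimage_add_left_eq_image)
    ultimately show ?thesis
      using h A s_borel[OF A] \<nu> unfolding left_haar_measure_def by simp
  qed
  moreover have "emeasure ?\<nu> K < \<infinity>" if "compact K" for K
  proof -
    have "compact (?s ` K)" by (rule compact_continuous_image[OF _ that]) (intro continuous_intros)
    then show ?thesis
      using \<nu>[of K] emeasure_left_haar_compact[OF h] that by (simp add: compact_imp_closed)
  qed
  moreover have "0 < emeasure ?\<nu> U" if "open U" "U \<noteq> {}" for U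
  proof -
    have "continuous_on UNIV (\<lambda>x. x + g)" by (intro continuous_intros)
    then have "open (?s ` U)"
      using \<open>open U\<close> by (simp add: vimage_add_right_eq_image[symmetric] continuous_on_open_vimage)
    then show ?thesis
      using that \<nu> by (simp add: emeasure_left_haar_open_pos[OF h])
  qed
  ultimately show ?thesis unfolding left_haar_measure_def by simp
qed

text \<open>The constant \<open>c\<close> is the modular function at \<open>g\<close>.\<close>

lemma nn_integral_right_translation:
  fixes \<mu> :: "'g::{topological_group_add,t2_space,second_countable_topology} measure"
  assumes lc: "lcsc_group TYPE('g)" and h: "left_haar_measure \<mu>"
  obtains c :: ennreal where "0 < c" "c < \<infinity>"
    "\<And>\<phi>. \<phi> \<in> borel_measurable borel \<Longrightarrow> (\<integral>\<^sup>+x. \<phi> (x + g) \<partial>\<mu>) = c * (\<integral>\<^sup>+x. \<phi> x \<partial>\<mu>)"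
proof -
  obtain c :: ennreal where c: "0 < c" "c < \<infinity>"
    "\<And>A. A \<in> sets borel \<Longrightarrow> emeasure (distr \<mu> borel (\<lambda>x. x + g)) A = c * emeasure \<mu> A"
    using left_haar_measure_unique[OF lc h left_haar_distr_right_translation[OF h]] by blast
  have meas: "(\<lambda>x. x + g) \<in> measurable \<mu> borel" by (simp add: measurable_left_haar_iff[OF h])
  have density: "distr \<mu> borel (\<lambda>x. x + g) = density \<mu> (\<lambda>_. c)"
  proof (rule measure_eqI)
    show "sets (distr \<mu> borel (\<lambda>x. x + g)) = sets (density \<mu> (\<lambda>_. c))"
      by (simp add: sets_left_haar[OF h])
    fix A assume "A \<in> sets (distr \<mu> borel (\<lambda>x. x + g))"
    then show "emeasure (distr \<mu> borel (\<lambda>x. x + g)) A = emeasure (density \<mu> (\<lambda>_. c)) A"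
      using c(3) by (simp add: emeasure_density nn_integral_cmult_indicator sets_left_haar[OF h])
  qed
  have "(\<integral>\<^sup>+x. \<phi> (x + g) \<partial>\<mu>) = c * (\<integral>\<^sup>+x. \<phi> x \<partial>\<mu>)" if \<phi>: "\<phi> \<in> borel_measurable borel" for \<phi>
  proof -
    have \<phi>': "\<phi> \<in> borel_measurable \<mu>" using \<phi> by (simp add: measurable_left_haar_iff[OF h])
    have "(\<integral>\<^sup>+x. \<phi> (x + g) \<partial>\<mu>) = (\<integral>\<^sup>+x. \<phi> x \<partial>distr \<mu> borel (\<lambda>x. x + g))"
      using meas \<phi> by (simp add: nn_integral_distr)
    also have "\<dots> = c * (\<integral>\<^sup>+x. \<phi> x \<partial>\<mu>)"
      unfolding density using \<phi>' by (simp add: nn_integral_density nn_integral_cmult)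
    finally show ?thesis .
  qed
  with c show ?thesis using that by blast
qed

text \<open>For \<open>g \<in> W \<subseteq> C\<close> with \<open>C\<close> compact, the right translate of a compact \<open>K\<close> by \<open>-g\<close> lies in
  the compact set \<open>K - C\<close>, which bounds the modular function on \<open>W\<close> by \<open>\<mu> (K - C) / \<mu> K\<close>.\<close>

lemma nn_integral_right_translation_local_bound:
  fixes \<mu> :: "'g::{topological_group_add,t2_space,second_countable_topology} measure"
  assumes lc: "lcsc_group TYPE('g)" and h: "left_haar_measure \<mu>"
  obtains W B where "open W" "g0 \<in> W" "B < \<infinity>"
    "\<And>g \<phi>. g \<in> W \<Longrightarrow> \<phi> \<in> borel_measurable borel \<Longrightarrow> (\<integral>\<^sup>+x. \<phi> (x + g) \<partial>\<mu>) \<le> B * (\<integral>\<^sup>+x. \<phi> x \<partial>\<mu>)"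
proof -
  obtain U K where UK: "open U" "compact K" "(0::'g) \<in> U" "U \<subseteq> K"
    using lcsc_compact_neighbourhood[OF lc] by blast
  obtain W C where WC: "open W" "compact C" "(g0::'g) \<in> W" "W \<subseteq> C"
    using lcsc_compact_neighbourhood[OF lc] by blast
  have K[measurable]: "K \<in> sets borel" using UK(2) by (simp add: compact_imp_closed)
  have K_bounds: "0 < emeasure \<mu> K" "emeasure \<mu> K < \<infinity>"
    using emeasure_right_translate_compact_bounds[OF h UK(2,1,3,4), of 0] by simp_all
  define S where "S = (\<lambda>q. fst q - snd q) ` (K \<times> C)"
  have "compact S" unfolding S_def
    by (rule compact_continuous_image) (auto intro!: continuous_intros compact_Times UK WC)
  then have S: "S \<in> sets \<mu>" "emeasure \<mu> S < \<infinity>"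
    using emeasure_left_haar_compact[OF h] by (simp_all add: sets_left_haar[OF h] compact_imp_closed)
  define B where "B = emeasure \<mu> S / emeasure \<mu> K"
  have "B < \<infinity>" unfolding B_def using S K_bounds
    by (auto simp add: less_top[symmetric] ennreal_divide_eq_top_iff)
  moreover have "(\<integral>\<^sup>+x. \<phi> (x + g) \<partial>\<mu>) \<le> B * (\<integral>\<^sup>+x. \<phi> x \<partial>\<mu>)"
    if "g \<in> W" and \<phi>: "\<phi> \<in> borel_measurable borel" for g \<phi>
  proof -
    obtain c :: ennreal where c:
      "\<And>\<phi>. \<phi> \<in> borel_measurable borel \<Longrightarrow> (\<integral>\<^sup>+x. \<phi> (x + g) \<partial>\<mu>) = c * (\<integral>\<^sup>+x. \<phi> x \<partial>\<mu>)"
      using nn_integral_right_translation[OF lc h] by blast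
    have "{x. x + g \<in> K} \<subseteq> S"
    proof
      fix x assume "x \<in> {x. x + g \<in> K}"
      then have "(x + g, g) \<in> K \<times> C" using \<open>g \<in> W\<close> WC by auto
      then show "x \<in> S" unfolding S_def by (rule rev_image_eqI) simp
    qed
    then have "emeasure \<mu> {x. x + g \<in> K} \<le> emeasure \<mu> S" using S by (intro emeasure_mono)
    then have "c * emeasure \<mu> K \<le> emeasure \<mu> S"
      using c[of "indicator K"] h by (simp add: emeasure_right_translate_preimage sets_left_haar)
    then have "c * emeasure \<mu> K / emeasure \<mu> K \<le> B" unfolding B_def
      by (rule divide_right_mono_ennreal)
    then have "c \<le> B" using K_bounds by (simp add: mult_divide_eq_ennreal less_top[symmetric])
    then show ?thesis using c[OF \<phi>] by (simp add: mult_right_mono)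
  qed
  ultimately show ?thesis using that WC by blast
qed

section \<open>Uniform boundedness of continuous representations\<close>

lemma pointwise_bounded_linear_family_bounded_on_ball:
  fixes T :: "'i \<Rightarrow> 'a::banach \<Rightarrow> 'b::real_normed_vector"
  assumes lin: "\<forall>i\<in>I. bounded_linear (T i)"
    and pointwise: "\<forall>v. \<exists>B. \<forall>i\<in>I. norm (T i v) \<le> B"
  shows "\<exists>n::nat. \<exists>v0. \<exists>r>0. \<forall>i\<in>I. \<forall>w\<in>ball v0 r. norm (T i w) \<le> n"
proof -
  define E where "E n = {v. \<forall>i\<in>I. norm (T i v) \<le> real n}" for n :: nat
  have closed: "closed (E n)" for n
  proof -
    have "closed {v. norm (T i v) \<le> real n}" if "i \<in> I" for i
      using lin[rule_format, OF that] by (intro closed_Collect_le continuous_intros linear_continuous_on) auto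
    moreover have "E n = (\<Inter>i\<in>I. {v. norm (T i v) \<le> real n})" unfolding E_def by auto
    ultimately show ?thesis by auto
  qed
  have cover: "\<Union>(range E) = UNIV"
  proof -
    have "v \<in> \<Union>(range E)" for v
    proof -
      obtain B where "\<forall>i\<in>I. norm (T i v) \<le> B" using pointwise by blast
      moreover obtain n :: nat where "B \<le> real n" using real_arch_simple by blast
      ultimately have "v \<in> E n" unfolding E_def using order_trans by blast
      then show ?thesis by blast
    qed
    then show ?thesis by blast
  qed
  have "\<exists>n. interior (E n) \<noteq> {}"
  proof (rule ccontr)
    assume "\<not> (\<exists>n. interior (E n) \<noteq> {})"
    then have "euclidean interior_of \<Union>(range E) = {}"
      by (intro Baire_category_alt)
        (auto simp: completely_metrizable_space_euclidean closed closed_closedin[symmetric])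
    then show False using cover by simp
  qed
  then obtain n v0 where "v0 \<in> interior (E n)" by blast
  then obtain r where "r > 0" "ball v0 r \<subseteq> E n"
    using open_contains_ball by (metis interior_subset open_interior subset_trans)
  then show ?thesis unfolding E_def by (intro exI[of _ n] exI[of _ v0] exI[of _ r]) auto
qed

theorem uniform_boundedness:
  fixes T :: "'i \<Rightarrow> 'a::banach \<Rightarrow> 'b::real_normed_vector"
  assumes lin: "\<forall>i\<in>I. bounded_linear (T i)"
    and pointwise: "\<forall>v. \<exists>B. \<forall>i\<in>I. norm (T i v) \<le> B"
  obtains M where "0 < M" "\<And>i v. i \<in> I \<Longrightarrow> norm (T i v) \<le> M * norm v"
proof -
  from pointwise_bounded_linear_family_bounded_on_ball[OF lin pointwise] obtain n :: nat and v0 r where r: "r > 0" and ball: "\<forall>i\<in>I. \<forall>w\<in>ball v0 r. norm (T i w) \<le> n"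
    by (elim exE conjE)
  have small: "norm (T i w) \<le> 2 * n" if i: "i \<in> I" and w: "norm w < r" for i w
  proof -
    have "dist v0 (v0 + w) < r" "dist v0 v0 < r" using w r by (simp_all add: dist_norm)
    then have "norm (T i (v0 + w)) \<le> n" "norm (T i v0) \<le> n" using ball i by auto
    moreover have "T i w = T i (v0 + w) - T i v0"
      using linear_add[OF bounded_linear.linear[OF lin[rule_format, OF i]]] by simp
    then have "norm (T i w) \<le> norm (T i (v0 + w)) + norm (T i v0)"
      by (simp only: norm_triangle_ineq4)
    ultimately show ?thesis by linarith
  qed
  define M where "M = 4 * real n / r + 1"
  have M: "norm (T i v) \<le> M * norm v" if i: "i \<in> I" for i v
  proof (cases "v = 0")
    case True
    then show ?thesis using lin i by (simp add: bounded_linear.linear linear_0)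
  next
    case False
    define t where "t = r / (2 * norm v)"
    have t: "t > 0" unfolding t_def using False r by simp
    have "norm (t *\<^sub>R v) = r / 2" unfolding t_def using False r by simp
    then have "norm (T i (t *\<^sub>R v)) \<le> 2 * n" using small[OF i] r by simp
    then have "t * norm (T i v) \<le> 2 * n"
      using linear_scale[OF bounded_linear.linear[OF lin[rule_format, OF i]]] t by simp
    then have "norm (T i v) \<le> 2 * n / t" using t by (simp add: field_simps)
    also have "\<dots> = 4 * n / r * norm v" unfolding t_def using r False by (simp add: field_simps)
    also have "\<dots> \<le> M * norm v" unfolding M_def by (simp add: distrib_right)
    finally show ?thesis .
  qed
  have "0 < M" unfolding M_def using r by (simp add: add_nonneg_pos)
  from that[OF this M] show ?thesis .
qed

lemma cont_rep_locally_bounded: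
  fixes \<pi>0 :: "'g::{topological_group_add,t2_space,second_countable_topology} \<Rightarrow> 'v::banach \<Rightarrow> 'v"
  assumes lc: "lcsc_group TYPE('g)" and rep: "cont_rep \<pi>0"
  obtains W M where "open W" "g0 \<in> W" "0 < M" "\<And>g v. g \<in> W \<Longrightarrow> norm (\<pi>0 g v) \<le> M * norm v"
proof -
  obtain W C where WC: "open W" "compact C" "(g0::'g) \<in> W" "W \<subseteq> C"
    using lcsc_compact_neighbourhood[OF lc] by blast
  have "\<exists>B. \<forall>g\<in>C. norm (\<pi>0 g v) \<le> B" for v
  proof -
    have "compact ((\<lambda>g. \<pi>0 g v) ` C)"
      using rep WC(2) unfolding cont_rep_def
      by (intro compact_continuous_image) (auto intro: continuous_on_subset)
    then obtain B where "\<forall>x\<in>(\<lambda>g. \<pi>0 g v) ` C. norm x \<le> B"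
      using compact_imp_bounded bounded_iff by metis
    then show ?thesis by blast
  qed
  moreover have "bounded_linear (\<pi>0 g)" for g using rep unfolding cont_rep_def by blast
  ultimately obtain M where "0 < M" and M: "\<And>g v. g \<in> C \<Longrightarrow> norm (\<pi>0 g v) \<le> M * norm v"
    using uniform_boundedness[of C "\<pi>0"] by metis
  show ?thesis by (rule that[OF WC(1,3) \<open>0 < M\<close>]) (use M WC(4) in blast)
qed

section \<open>Integrals of \<open>p\<close>-th powers\<close>

text \<open>All \<open>L\<^sup>p\<close> estimates are carried out on \<open>\<integral>\<parallel>f\<parallel>\<^sup>p\<close>, which satisfies the quasi-triangle inequality
  \<open>\<integral>\<parallel>f + g\<parallel>\<^sup>p \<le> 2\<^sup>p (\<integral>\<parallel>f\<parallel>\<^sup>p + \<integral>\<parallel>g\<parallel>\<^sup>p)\<close> for every \<open>p > 0\<close>.\<close>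

definition Lp_pow :: "'a measure \<Rightarrow> real \<Rightarrow> ('a \<Rightarrow> 'v::real_normed_vector) \<Rightarrow> ennreal" where
  "Lp_pow M p f = (\<integral>\<^sup>+x. ennreal (norm (f x) powr p) \<partial>M)"

lemma Lp_iff_Lp_pow:
  fixes f :: "'a \<Rightarrow> 'v::{banach,second_countable_topology}"
  shows "f \<in> Lp M p \<longleftrightarrow> f \<in> borel_measurable M \<and> Lp_pow M p f < \<infinity>"
proof (cases "f \<in> borel_measurable M")
  case True
  then have "(\<lambda>x. norm (f x) powr p) \<in> borel_measurable M" by measurable
  then show ?thesis unfolding Lp_def Lp_pow_def integrable_iff_bounded by simp
qed (simp add: Lp_def)

lemma ennreal_enn2real_Lp_pow: "f \<in> Lp M p \<Longrightarrow> Lp_pow M p f = ennreal (enn2real (Lp_pow M p f))"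
  for f :: "'a \<Rightarrow> 'v::{banach,second_countable_topology}"
  by (simp add: Lp_iff_Lp_pow less_top)

lemma Lp_norm_eq_Lp_pow:
  fixes f :: "'a \<Rightarrow> 'v::{banach,second_countable_topology}"
  assumes "f \<in> borel_measurable M"
  shows "Lp_norm M p f = enn2real (Lp_pow M p f) powr (1/p)"
  unfolding Lp_norm_def Lp_pow_def using assms by (subst integral_eq_nn_integral) auto

lemma Lp_norm_nonneg: "Lp_norm M p f \<ge> 0"
  unfolding Lp_norm_def by simp

lemma Lp_norm_powr:
  fixes f :: "'a \<Rightarrow> 'v::{banach,second_countable_topology}"
  assumes "p > 0" "f \<in> Lp M p"
  shows "Lp_norm M p f powr p = enn2real (Lp_pow M p f)"
  using assms by (simp add: Lp_iff_Lp_pow Lp_norm_eq_Lp_pow powr_powr)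

lemma Lp_pow_cong_AE: "AE x in M. f x = g x \<Longrightarrow> Lp_pow M p f = Lp_pow M p g"
  unfolding Lp_pow_def by (intro nn_integral_cong_AE) auto

lemma norm_add_powr_le:
  fixes a b :: "'v::real_normed_vector"
  assumes "p > 0"
  shows "norm (a + b) powr p \<le> 2 powr p * (norm a powr p + norm b powr p)"
proof -
  define m where "m = max (norm a) (norm b)"
  have "norm (a + b) \<le> 2 * m" unfolding m_def by (smt (verit) norm_triangle_ineq)
  then have "norm (a + b) powr p \<le> (2 * m) powr p" using assms by (intro powr_mono2) auto
  also have "\<dots> = 2 powr p * m powr p" unfolding m_def by (simp add: powr_mult)
  also have "m powr p \<le> norm a powr p + norm b powr p" unfolding m_def by (simp add: max_def)
  then have "2 powr p * m powr p \<le> 2 powr p * (norm a powr p + norm b powr p)" by simp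
  finally show ?thesis .
qed

lemma Lp_pow_add_le:
  fixes f g :: "'a \<Rightarrow> 'v::{banach,second_countable_topology}"
  assumes p: "p > 0" and [measurable]: "f \<in> borel_measurable M" "g \<in> borel_measurable M"
  shows "Lp_pow M p (\<lambda>x. f x + g x) \<le> ennreal (2 powr p) * (Lp_pow M p f + Lp_pow M p g)"
proof -
  have "Lp_pow M p (\<lambda>x. f x + g x)
      \<le> (\<integral>\<^sup>+x. ennreal (2 powr p) * (ennreal (norm (f x) powr p) + ennreal (norm (g x) powr p)) \<partial>M)"
    unfolding Lp_pow_def
    by (intro nn_integral_mono) (simp add: norm_add_powr_le[OF p] ennreal_mult[symmetric]
        ennreal_plus[symmetric] del: ennreal_plus)
  also have "\<dots> = ennreal (2 powr p) * (Lp_pow M p f + Lp_pow M p g)"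
    unfolding Lp_pow_def by (simp add: nn_integral_cmult nn_integral_add)
  finally show ?thesis .
qed

lemma Lp_pow_uminus: "Lp_pow M p (\<lambda>x. - f x) = Lp_pow M p f"
  unfolding Lp_pow_def by simp

lemma Lp_pow_diff_le:
  fixes f g :: "'a \<Rightarrow> 'v::{banach,second_countable_topology}"
  assumes p: "p > 0" and [measurable]: "f \<in> borel_measurable M" "g \<in> borel_measurable M"
  shows "Lp_pow M p (\<lambda>x. f x - g x) \<le> ennreal (2 powr p) * (Lp_pow M p f + Lp_pow M p g)"
  using Lp_pow_add_le[OF p, of f M "\<lambda>x. - g x"] by (simp add: Lp_pow_uminus)

lemma Lp_pow_scaleR:
  fixes f :: "'a \<Rightarrow> 'v::{banach,second_countable_topology}"
  assumes "p > 0" and [measurable]: "f \<in> borel_measurable M"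
  shows "Lp_pow M p (\<lambda>x. c *\<^sub>R f x) = ennreal (\<bar>c\<bar> powr p) * Lp_pow M p f"
  unfolding Lp_pow_def using assms by (simp add: powr_mult ennreal_mult nn_integral_cmult)

lemma AE_eq_0_if_Lp_pow_eq_0:
  fixes f :: "'a \<Rightarrow> 'v::{banach,second_countable_topology}"
  assumes p: "p > 0" and [measurable]: "f \<in> borel_measurable M" and "Lp_pow M p f = 0"
  shows "AE x in M. f x = 0"
proof -
  have "AE x in M. ennreal (norm (f x) powr p) = 0"
    using assms(3) unfolding Lp_pow_def by (subst nn_integral_0_iff_AE[symmetric]) auto
  then show ?thesis by eventually_elim (use p in \<open>auto simp: ennreal_eq_0_iff\<close>)
qed

lemma Lp_add:
  fixes f g :: "'a \<Rightarrow> 'v::{banach,second_countable_topology}"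
  assumes p: "p > 0" and "f \<in> Lp M p" "g \<in> Lp M p"
  shows "(\<lambda>x. f x + g x) \<in> Lp M p"
proof -
  have [measurable]: "f \<in> borel_measurable M" "g \<in> borel_measurable M"
    using assms by (auto simp: Lp_iff_Lp_pow)
  have "Lp_pow M p (\<lambda>x. f x + g x) \<le> ennreal (2 powr p) * (Lp_pow M p f + Lp_pow M p g)"
    by (rule Lp_pow_add_le[OF p]) measurable
  also have "\<dots> < \<infinity>" using assms by (simp add: Lp_iff_Lp_pow ennreal_mult_less_top)
  finally show ?thesis by (simp add: Lp_iff_Lp_pow)
qed

lemma Lp_diff:
  fixes f g :: "'a \<Rightarrow> 'v::{banach,second_countable_topology}"
  assumes p: "p > 0" and "f \<in> Lp M p" "g \<in> Lp M p"
  shows "(\<lambda>x. f x - g x) \<in> Lp M p"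
proof -
  have [measurable]: "f \<in> borel_measurable M" "g \<in> borel_measurable M"
    using assms by (auto simp: Lp_iff_Lp_pow)
  have "Lp_pow M p (\<lambda>x. f x - g x) \<le> ennreal (2 powr p) * (Lp_pow M p f + Lp_pow M p g)"
    by (rule Lp_pow_diff_le[OF p]) measurable
  also have "\<dots> < \<infinity>" using assms by (simp add: Lp_iff_Lp_pow ennreal_mult_less_top)
  finally show ?thesis by (simp add: Lp_iff_Lp_pow)
qed

lemma Lp_norm_scaleR:
  fixes f :: "'a \<Rightarrow> 'v::{banach,second_countable_topology}"
  assumes p: "p > 0" and [measurable]: "f \<in> borel_measurable M"
  shows "Lp_norm M p (\<lambda>x. c *\<^sub>R f x) = \<bar>c\<bar> * Lp_norm M p f"
proof -
  have "Lp_norm M p (\<lambda>x. c *\<^sub>R f x) = (\<bar>c\<bar> powr p * enn2real (Lp_pow M p f)) powr (1/p)"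
    by (simp add: Lp_norm_eq_Lp_pow Lp_pow_scaleR[OF p] enn2real_mult)
  also have "\<dots> = \<bar>c\<bar> * Lp_norm M p f"
    using p by (simp add: powr_mult powr_powr Lp_norm_eq_Lp_pow)
  finally show ?thesis .
qed

lemma two_pow_mult_powr: "y \<ge> 0 \<Longrightarrow> ((2::real) ^ k * y) powr p = (2 powr p) ^ k * y powr p"
  by (simp add: powr_mult powr_realpow[symmetric] powr_powr mult.commute powr_power)

text \<open>Each \<open>y\<^sub>k\<close> is at most \<open>S\<^sup>1\<^sup>/\<^sup>p 2\<^sup>-\<^sup>k\<close>, where \<open>S\<close> is the weighted sum on the right.\<close>

lemma sum_powr_le_weighted:
  fixes y :: "nat \<Rightarrow> real"
  assumes y: "\<And>k. y k \<ge> 0" and p: "p > 0"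
  shows "(\<Sum>k<n. y k) powr p \<le> 2 powr p * (\<Sum>k<n. (2 powr p) ^ k * y k powr p)"
proof -
  define S where "S = (\<Sum>k<n. (2 powr p) ^ k * y k powr p)"
  have S0: "S \<ge> 0" unfolding S_def by (intro sum_nonneg) auto
  have yk: "y k \<le> S powr (1/p) * (1/2) ^ k" if "k < n" for k
  proof -
    have "((2::real) ^ k * y k) powr p = (2 powr p) ^ k * y k powr p" using y by (rule two_pow_mult_powr)
    also have "\<dots> \<le> S" unfolding S_def using that by (intro member_le_sum) auto
    finally have "(((2::real) ^ k * y k) powr p) powr (1/p) \<le> S powr (1/p)"
      using p by (intro powr_mono2) auto
    then have "2 ^ k * y k \<le> S powr (1/p)" using p y by (simp add: powr_powr)
    then show ?thesis by (simp add: field_simps power_one_over)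
  qed
  have "(\<Sum>k<n. y k) \<le> (\<Sum>k<n. S powr (1/p) * (1/2) ^ k)" using yk by (intro sum_mono) auto
  also have "\<dots> = S powr (1/p) * (\<Sum>k<n. (1/2) ^ k)" by (simp add: sum_distrib_left)
  also have "(\<Sum>k<n. (1/2::real) ^ k) \<le> 2" by (simp add: sum_gp_strict)
  then have "S powr (1/p) * (\<Sum>k<n. (1/2::real) ^ k) \<le> S powr (1/p) * 2" by (intro mult_left_mono) auto
  finally have "(\<Sum>k<n. y k) powr p \<le> (2 * S powr (1/p)) powr p"
    using p y by (intro powr_mono2) (auto intro: sum_nonneg)
  also have "\<dots> = 2 powr p * S" using S0 p by (simp add: powr_mult powr_powr)
  finally show ?thesis unfolding S_def .
qed

lemma suminf_powr_le_weighted: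
  fixes y :: "nat \<Rightarrow> real"
  assumes y: "\<And>k. y k \<ge> 0" and p: "p > 0" and "summable y"
  shows "ennreal (suminf y powr p) \<le> ennreal (2 powr p) * (\<Sum>k. ennreal ((2 powr p) ^ k * y k powr p))"
proof -
  have lim: "(\<lambda>n. ennreal ((\<Sum>k<n. y k) powr p)) \<longlonglongrightarrow> ennreal (suminf y powr p)"
    using p y by (intro tendsto_ennrealI tendsto_powr' summable_LIMSEQ[OF \<open>summable y\<close>])
      (auto intro!: sum_nonneg always_eventually)
  show ?thesis
  proof (rule LIMSEQ_le_const2[OF lim], intro exI allI impI)
    fix n
    have "ennreal ((\<Sum>k<n. y k) powr p) \<le> ennreal (2 powr p * (\<Sum>k<n. (2 powr p) ^ k * y k powr p))"
      by (intro ennreal_leI sum_powr_le_weighted y p)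
    also have "\<dots> = ennreal (2 powr p) * (\<Sum>k<n. ennreal ((2 powr p) ^ k * y k powr p))"
      by (subst sum_ennreal) (auto simp: ennreal_mult sum_nonneg)
    also have "\<dots> \<le> ennreal (2 powr p) * (\<Sum>k. ennreal ((2 powr p) ^ k * y k powr p))"
      by (intro mult_left_mono sum_le_suminf) auto
    finally show "ennreal ((\<Sum>k<n. y k) powr p) \<le> \<dots>" .
  qed
qed

lemma summable_if_weighted_powr_finite:
  fixes y :: "nat \<Rightarrow> real"
  assumes p: "p > 0" and y: "\<And>k. y k \<ge> 0"
    and weighted_sum: "(\<Sum>k. ennreal ((2 powr p) ^ k * y k powr p)) \<noteq> \<infinity>"
  shows "summable y"
proof -
  define w where "w k = (2 powr p) ^ k * y k powr p" for k
  have w_nonneg: "w k \<ge> 0" for k unfolding w_def by simp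
  have "summable w" using weighted_sum unfolding w_def by (intro summable_suminf_not_top) auto
  have bound: "y k \<le> suminf w powr (1/p) * (1/2) ^ k" for k
  proof -
    have "w k \<le> suminf w" using sum_le_suminf[OF \<open>summable w\<close>, of "{k}"] w_nonneg by simp
    then have "(2 ^ k * y k) powr p \<le> suminf w" using two_pow_mult_powr[of "y k" k p] y by (simp add: w_def)
    then have "((2 ^ k * y k) powr p) powr (1/p) \<le> suminf w powr (1/p)" using p by (intro powr_mono2) auto
    then have "2 ^ k * y k \<le> suminf w powr (1/p)" using p y by (simp add: powr_powr)
    then have "y k \<le> suminf w powr (1/p) / 2 ^ k" by (simp add: pos_le_divide_eq mult.commute)
    then show ?thesis by (metis power_one_over times_divide_eq_right mult_1_right)
  qed
  show ?thesis
    by (rule summable_comparison_test'[where g="\<lambda>k. suminf w powr (1/p) * (1/2) ^ k" and N=0])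
      (use bound y in \<open>auto intro!: summable_mult\<close>)
qed

context
  fixes a :: "nat \<Rightarrow> 'a \<Rightarrow> 'v::{banach,second_countable_topology}" and M p A d
  assumes p: "p > 0" and a_measurable[measurable]: "\<And>k. a k \<in> borel_measurable M"
    and a_bound: "\<And>k. Lp_pow M p (a k) \<le> ennreal (A * d ^ k)"
    and A: "A \<ge> 0" and d: "d \<ge> 0" and d_small: "2 powr p * d < 1"
begin

lemma nn_integral_weighted_tail_le:
  "(\<integral>\<^sup>+x. (\<Sum>j. ennreal ((2 powr p) ^ j * norm (a (j + K) x) powr p)) \<partial>M)
    \<le> ennreal (A * d ^ K / (1 - 2 powr p * d))"
proof -
  let ?r = "2 powr p"
  have "(\<integral>\<^sup>+x. (\<Sum>j. ennreal (?r ^ j * norm (a (j + K) x) powr p)) \<partial>M)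
      = (\<Sum>j. ennreal (?r ^ j) * Lp_pow M p (a (j + K)))"
    unfolding Lp_pow_def by (subst nn_integral_suminf) (simp_all add: ennreal_mult nn_integral_cmult)
  also have "\<dots> \<le> (\<Sum>j. ennreal (?r ^ j) * ennreal (A * d ^ (j + K)))"
    by (intro suminf_le mult_left_mono a_bound) auto
  also have "\<dots> = (\<Sum>j. ennreal ((A * d ^ K) * (?r * d) ^ j))"
    using A d by (simp add: ennreal_mult[symmetric] power_add power_mult_distrib mult_ac)
  also have "\<dots> = ennreal (A * d ^ K / (1 - ?r * d))"
  proof -
    have "(\<lambda>j. (A * d ^ K) * (?r * d) ^ j) sums ((A * d ^ K) * (1 / (1 - ?r * d)))"
      using d_small d by (intro sums_mult geometric_sums) auto
    then have "(\<lambda>j. ennreal ((A * d ^ K) * (?r * d) ^ j)) sums ennreal (A * d ^ K / (1 - ?r * d))"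
      using A d d_small by (subst sums_ennreal) auto
    then show ?thesis by (simp add: sums_unique[symmetric])
  qed
  finally show ?thesis .
qed

lemma AE_summable_norm_series: "AE x in M. summable (\<lambda>k. norm (a k x))"
proof -
  have "AE x in M. (\<Sum>j. ennreal ((2 powr p) ^ j * norm (a (j + 0) x) powr p)) \<noteq> \<infinity>"
    using nn_integral_weighted_tail_le[of 0]
    by (intro nn_integral_PInf_AE) (auto simp: top_unique)
  then show ?thesis by eventually_elim (rule summable_if_weighted_powr_finite[OF p], auto)
qed

lemma Lp_pow_series_tail_le:
  "Lp_pow M p (\<lambda>x. (\<Sum>k. a k x) - (\<Sum>k<K. a k x))
    \<le> ennreal (2 powr p * (A * d ^ K / (1 - 2 powr p * d)))"
proof -
  let ?G = "\<lambda>x. \<Sum>j. ennreal ((2 powr p) ^ j * norm (a (j + K) x) powr p)"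
  have "ennreal (norm ((\<Sum>k. a k x) - (\<Sum>k<K. a k x)) powr p) \<le> ennreal (2 powr p) * ?G x"
    if "summable (\<lambda>k. norm (a k x))" for x
  proof -
    have tail: "summable (\<lambda>j. norm (a (j + K) x))" using that by (rule summable_ignore_initial_segment)
    have "(\<Sum>k. a k x) - (\<Sum>k<K. a k x) = (\<Sum>j. a (j + K) x)"
      using suminf_split_initial_segment[OF summable_norm_cancel[OF that], of K] by simp
    then have "norm ((\<Sum>k. a k x) - (\<Sum>k<K. a k x)) \<le> (\<Sum>j. norm (a (j + K) x))"
      using summable_norm[OF tail] by simp
    then have "ennreal (norm ((\<Sum>k. a k x) - (\<Sum>k<K. a k x)) powr p)
        \<le> ennreal ((\<Sum>j. norm (a (j + K) x)) powr p)"
      using p by (intro ennreal_leI powr_mono2) auto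
    also have "\<dots> \<le> ennreal (2 powr p) * ?G x"
      by (rule suminf_powr_le_weighted[OF _ p tail]) simp
    finally show ?thesis .
  qed
  then have "Lp_pow M p (\<lambda>x. (\<Sum>k. a k x) - (\<Sum>k<K. a k x)) \<le> (\<integral>\<^sup>+x. ennreal (2 powr p) * ?G x \<partial>M)"
    unfolding Lp_pow_def using AE_summable_norm_series
    by (intro nn_integral_mono_AE) (auto elim!: eventually_mono)
  also have "\<dots> = ennreal (2 powr p) * (\<integral>\<^sup>+x. ?G x \<partial>M)" by (simp add: nn_integral_cmult)
  also have "\<dots> \<le> ennreal (2 powr p) * ennreal (A * d ^ K / (1 - 2 powr p * d))"
    by (intro mult_left_mono nn_integral_weighted_tail_le) auto
  also have "\<dots> = ennreal (2 powr p * (A * d ^ K / (1 - 2 powr p * d)))"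
    using A d d_small by (simp add: ennreal_mult[symmetric])
  finally show ?thesis .
qed

end

section \<open>The representation \<open>\<pi>\<^sub>p\<close>\<close>

locale haar_representation =
  fixes \<mu> :: "'g::{topological_group_add,t2_space,second_countable_topology} measure"
    and \<pi>0 :: "'g \<Rightarrow> 'v::{banach,second_countable_topology} \<Rightarrow> 'v"
    and p :: real
  assumes lcsc: "lcsc_group TYPE('g)" and haar: "left_haar_measure \<mu>"
    and rep: "cont_rep \<pi>0" and p_gt_1: "p > 1"
begin

lemma p_pos: "p > 0"
  using p_gt_1 by simp

lemma space_eq[simp]: "space \<mu> = UNIV"
  using space_left_haar[OF haar] .

lemma borel_measurable_iff: "f \<in> borel_measurable \<mu> \<longleftrightarrow> f \<in> borel_measurable borel"
  using measurable_left_haar_iff[OF haar] .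

lemma rep_bounded_linear: "bounded_linear (\<pi>0 g)"
  using rep unfolding cont_rep_def by blast

lemma rep_linear:
  "\<pi>0 g (v + w) = \<pi>0 g v + \<pi>0 g w" "\<pi>0 g (v - w) = \<pi>0 g v - \<pi>0 g w"
  "\<pi>0 g (c *\<^sub>R v) = c *\<^sub>R \<pi>0 g v" "\<pi>0 g (\<Sum>k\<in>A. u k) = (\<Sum>k\<in>A. \<pi>0 g (u k))"
  using rep_bounded_linear[of g]
  by (simp_all add: linear_add linear_diff linear_scale linear_sum bounded_linear.linear)

lemma rep_compose: "\<pi>0 g (\<pi>0 h v) = \<pi>0 (g + h) v"
  using rep unfolding cont_rep_def by simp

lemma rep_zero: "\<pi>0 0 v = v"
  using rep unfolding cont_rep_def by simp

lemma pi_p_measurable[measurable]: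
  assumes "f \<in> borel_measurable \<mu>"
  shows "pi_p \<pi>0 g f \<in> borel_measurable \<mu>"
proof -
  have "(\<lambda>x. f (x + g)) \<in> borel_measurable borel"
    using assms by (simp add: borel_measurable_iff)
  then have "(\<lambda>x. \<pi>0 g (f (x + g))) \<in> borel_measurable borel"
    by (rule borel_measurable_continuous_on[rotated]) (intro linear_continuous_on rep_bounded_linear)
  then show ?thesis unfolding pi_p_def by (simp add: borel_measurable_iff)
qed

lemma pi_p_compose: "pi_p \<pi>0 g (pi_p \<pi>0 h f) = pi_p \<pi>0 (g + h) f"
  unfolding pi_p_def by (simp add: rep_compose add.assoc)

lemma pi_p_zero: "pi_p \<pi>0 0 f = f"
  unfolding pi_p_def by (simp add: rep_zero)

lemma pi_p_add: "pi_p \<pi>0 g (\<lambda>x. f x + f' x) x = pi_p \<pi>0 g f x + pi_p \<pi>0 g f' x"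
  and pi_p_diff: "pi_p \<pi>0 g (\<lambda>x. f x - f' x) x = pi_p \<pi>0 g f x - pi_p \<pi>0 g f' x"
  and pi_p_scaleR: "pi_p \<pi>0 g (\<lambda>x. c *\<^sub>R f x) x = c *\<^sub>R pi_p \<pi>0 g f x"
  and pi_p_sum: "pi_p \<pi>0 g (\<lambda>x. \<Sum>k\<in>A. F k x) x = (\<Sum>k\<in>A. pi_p \<pi>0 g (F k) x)"
  unfolding pi_p_def by (simp_all add: rep_linear)

lemma Lp_pow_pi_p_local_bound:
  obtains W C where "open W" "g0 \<in> W" "C \<ge> 0"
    "\<And>g f. g \<in> W \<Longrightarrow> f \<in> borel_measurable \<mu> \<Longrightarrow> Lp_pow \<mu> p (pi_p \<pi>0 g f) \<le> ennreal C * Lp_pow \<mu> p f"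
proof -
  obtain W1 M where W1: "open W1" "g0 \<in> W1" "0 < M"
    and M: "\<And>g v. g \<in> W1 \<Longrightarrow> norm (\<pi>0 g v) \<le> M * norm v"
    using cont_rep_locally_bounded[OF lcsc rep] by blast
  obtain W2 B where W2: "open W2" "g0 \<in> W2" "B < \<infinity>"
    and B: "\<And>g \<phi>. g \<in> W2 \<Longrightarrow> \<phi> \<in> borel_measurable borel \<Longrightarrow>
      (\<integral>\<^sup>+x. \<phi> (x + g) \<partial>\<mu>) \<le> B * (\<integral>\<^sup>+x. \<phi> x \<partial>\<mu>)"
    using nn_integral_right_translation_local_bound[OF lcsc haar] by blast
  define C where "C = M powr p * enn2real B"
  have bound: "Lp_pow \<mu> p (pi_p \<pi>0 g f) \<le> ennreal C * Lp_pow \<mu> p f"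
    if g: "g \<in> W1" "g \<in> W2" and f: "f \<in> borel_measurable \<mu>" for g f
  proof -
    have [measurable]: "f \<in> borel_measurable borel" using f by (simp add: borel_measurable_iff)
    have "Lp_pow \<mu> p (pi_p \<pi>0 g f) \<le> (\<integral>\<^sup>+x. ennreal (M powr p) * ennreal (norm (f (x + g)) powr p) \<partial>\<mu>)"
      unfolding Lp_pow_def pi_p_def
    proof (intro nn_integral_mono)
      fix x
      have "norm (\<pi>0 g (f (x + g))) powr p \<le> (M * norm (f (x + g))) powr p"
        using M[OF g(1)] p_pos by (intro powr_mono2) auto
      then show "ennreal (norm (\<pi>0 g (f (x + g))) powr p)
          \<le> ennreal (M powr p) * ennreal (norm (f (x + g)) powr p)"
        using W1(3) by (simp add: powr_mult ennreal_mult[symmetric])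
    qed
    also have "\<dots> = ennreal (M powr p) * (\<integral>\<^sup>+x. ennreal (norm (f (x + g)) powr p) \<partial>\<mu>)"
      by (rule nn_integral_cmult) (simp add: borel_measurable_iff)
    also have "\<dots> \<le> ennreal (M powr p) * (B * Lp_pow \<mu> p f)"
      using B[OF g(2), of "\<lambda>y. ennreal (norm (f y) powr p)"] by (intro mult_left_mono) (simp_all add: Lp_pow_def)
    also have "\<dots> = ennreal C * Lp_pow \<mu> p f"
      using W2(3) by (simp add: C_def ennreal_mult mult.assoc)
    finally show ?thesis .
  qed
  show ?thesis by (rule that[of "W1 \<inter> W2" C]) (use W1 W2 bound in \<open>auto simp: C_def\<close>)
qed

lemma Lp_pow_pi_p_le:
  obtains C where "C \<ge> 0" "\<And>f. f \<in> borel_measurable \<mu> \<Longrightarrow> Lp_pow \<mu> p (pi_p \<pi>0 g f) \<le> ennreal C * Lp_pow \<mu> p f"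
  using Lp_pow_pi_p_local_bound[of g] by metis

lemma pi_p_Lp:
  assumes "f \<in> Lp \<mu> p"
  shows "pi_p \<pi>0 g f \<in> Lp \<mu> p"
proof -
  obtain C where "\<And>f. f \<in> borel_measurable \<mu> \<Longrightarrow> Lp_pow \<mu> p (pi_p \<pi>0 g f) \<le> ennreal C * Lp_pow \<mu> p f"
    using Lp_pow_pi_p_le by blast
  moreover have f: "f \<in> borel_measurable \<mu>" "Lp_pow \<mu> p f < \<infinity>" using assms by (auto simp: Lp_iff_Lp_pow)
  ultimately have "Lp_pow \<mu> p (pi_p \<pi>0 g f) \<le> ennreal C * Lp_pow \<mu> p f" by blast
  also have "\<dots> < \<infinity>" using f by (simp add: ennreal_mult_less_top)
  finally show ?thesis using f by (simp add: Lp_iff_Lp_pow)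
qed

lemma Lp_norm_pi_p_le:
  obtains K where "K \<ge> 0" "\<And>f. f \<in> Lp \<mu> p \<Longrightarrow> Lp_norm \<mu> p (pi_p \<pi>0 g f) \<le> K * Lp_norm \<mu> p f"
proof -
  obtain C where C: "C \<ge> 0"
    "\<And>f. f \<in> borel_measurable \<mu> \<Longrightarrow> Lp_pow \<mu> p (pi_p \<pi>0 g f) \<le> ennreal C * Lp_pow \<mu> p f"
    using Lp_pow_pi_p_le by blast
  have "Lp_norm \<mu> p (pi_p \<pi>0 g f) \<le> C powr (1/p) * Lp_norm \<mu> p f" if "f \<in> Lp \<mu> p" for f
  proof -
    have f: "f \<in> borel_measurable \<mu>" "Lp_pow \<mu> p f < \<infinity>" using that by (auto simp: Lp_iff_Lp_pow)
    have "enn2real (Lp_pow \<mu> p (pi_p \<pi>0 g f)) \<le> enn2real (ennreal C * Lp_pow \<mu> p f)"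
      using C f by (intro enn2real_mono) (auto simp: ennreal_mult_less_top)
    also have "\<dots> = C * enn2real (Lp_pow \<mu> p f)" using C(1) by (simp add: enn2real_mult)
    finally have "enn2real (Lp_pow \<mu> p (pi_p \<pi>0 g f)) powr (1/p) \<le> (C * enn2real (Lp_pow \<mu> p f)) powr (1/p)"
      using p_pos by (intro powr_mono2) auto
    also have "\<dots> = C powr (1/p) * enn2real (Lp_pow \<mu> p f) powr (1/p)" using C(1) by (simp add: powr_mult)
    finally show ?thesis using f by (simp add: Lp_norm_eq_Lp_pow)
  qed
  then show ?thesis using that[of "C powr (1/p)"] by simp
qed

lemma Lp_norm_pi_p_le_opnorm:
  assumes f: "f \<in> Lp \<mu> p"
  shows "Lp_norm \<mu> p (pi_p \<pi>0 g f) \<le> Lp_opnorm \<mu> p \<pi>0 g * Lp_norm \<mu> p f"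
proof -
  obtain K where K: "K \<ge> 0" "\<And>f. f \<in> Lp \<mu> p \<Longrightarrow> Lp_norm \<mu> p (pi_p \<pi>0 g f) \<le> K * Lp_norm \<mu> p f"
    using Lp_norm_pi_p_le by blast
  have le_opnorm: "Lp_norm \<mu> p (pi_p \<pi>0 g h) \<le> Lp_opnorm \<mu> p \<pi>0 g"
    if h: "h \<in> Lp \<mu> p" "Lp_norm \<mu> p h \<le> 1" for h
  proof -
    have "x \<le> K" if x: "x \<in> {Lp_norm \<mu> p (pi_p \<pi>0 g f) | f. f \<in> Lp \<mu> p \<and> Lp_norm \<mu> p f \<le> 1}" for x
    proof -
      obtain f where f: "f \<in> Lp \<mu> p" "Lp_norm \<mu> p f \<le> 1" "x = Lp_norm \<mu> p (pi_p \<pi>0 g f)"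
        using x by blast
      have "x \<le> K * Lp_norm \<mu> p f" using K(2)[OF f(1)] f(3) by simp
      also have "\<dots> \<le> K" using K(1) f(2) by (simp add: mult_left_le)
      finally show ?thesis .
    qed
    then show ?thesis unfolding Lp_opnorm_def using h by (intro cSup_upper bdd_aboveI) auto
  qed
  show ?thesis
  proof (cases "Lp_norm \<mu> p f = 0")
    case True
    then show ?thesis using K(2)[OF f] Lp_norm_nonneg[of \<mu> p "pi_p \<pi>0 g f"] by simp
  next
    case False
    define s where "s = Lp_norm \<mu> p f"
    have s: "s > 0" using False Lp_norm_nonneg[of \<mu> p f] unfolding s_def by simp
    have [measurable]: "f \<in> borel_measurable \<mu>" using f by (simp add: Lp_iff_Lp_pow)
    have "(\<lambda>x. (1/s) *\<^sub>R f x) \<in> Lp \<mu> p"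
      using f by (simp add: Lp_iff_Lp_pow Lp_pow_scaleR[OF p_pos] ennreal_mult_less_top)
    moreover have "Lp_norm \<mu> p (\<lambda>x. (1/s) *\<^sub>R f x) = 1"
      using s by (simp add: Lp_norm_scaleR[OF p_pos] s_def)
    ultimately have "Lp_norm \<mu> p (pi_p \<pi>0 g (\<lambda>x. (1/s) *\<^sub>R f x)) \<le> Lp_opnorm \<mu> p \<pi>0 g"
      by (intro le_opnorm) auto
    moreover have "pi_p \<pi>0 g (\<lambda>x. (1/s) *\<^sub>R f x) = (\<lambda>x. (1/s) *\<^sub>R pi_p \<pi>0 g f x)"
      using pi_p_scaleR by auto
    ultimately have "(1/s) * Lp_norm \<mu> p (pi_p \<pi>0 g f) \<le> Lp_opnorm \<mu> p \<pi>0 g"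
      using s by (simp add: Lp_norm_scaleR[OF p_pos])
    then show ?thesis using s unfolding s_def by (simp add: field_simps)
  qed
qed

end

section \<open>Correcting the cocycle along a contracting element\<close>

lemma gpow_0[simp]: "gpow \<xi> 0 = 0"
  unfolding gpow_def by simp

lemma gpow_Suc: "gpow \<xi> (Suc n) = \<xi> + gpow \<xi> n"
  unfolding gpow_def by simp

lemma gpow_add: "gpow \<xi> (m + n) = gpow \<xi> m + gpow \<xi> n"
  by (induction m) (simp_all add: gpow_Suc add.assoc)

lemma gpow_Suc_right: "gpow \<xi> (Suc n) = gpow \<xi> n + \<xi>"
  using gpow_add[of \<xi> n 1] by (simp add: gpow_def)

lemma gpow_commute: "\<xi> + gpow \<xi> n = gpow \<xi> n + \<xi>"
  by (simp add: gpow_Suc[symmetric] gpow_Suc_right[symmetric])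

lemma gpow_gpow: "gpow (gpow \<xi> m) k = gpow \<xi> (k * m)"
  by (induction k) (simp_all add: gpow_Suc gpow_add)

lemma tendsto_0_if_approximable:
  fixes q :: "'a \<Rightarrow> real" and \<alpha> :: "nat \<Rightarrow> 'a \<Rightarrow> real" and \<beta> :: "nat \<Rightarrow> real"
  assumes nonneg: "\<And>x. 0 \<le> q x"
    and approx: "\<And>K. \<forall>\<^sub>F x in F. q x \<le> \<alpha> K x + \<beta> K"
    and \<alpha>: "\<And>K. (\<alpha> K \<longlongrightarrow> 0) F" and \<beta>: "\<beta> \<longlonglongrightarrow> 0"
  shows "(q \<longlongrightarrow> 0) F"
proof (rule order_tendstoI)
  fix e :: real assume "e < 0"
  then show "\<forall>\<^sub>F x in F. e < q x" using nonneg by (simp add: less_le_trans)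
next
  fix e :: real assume e: "0 < e"
  obtain K where K: "\<beta> K < e / 2"
    using order_tendstoD(2)[OF \<beta>, of "e / 2"] e by (auto simp: eventually_sequentially)
  have "\<forall>\<^sub>F x in F. \<alpha> K x < e / 2" using order_tendstoD(2)[OF \<alpha>, of "e / 2"] e by simp
  with approx[of K] show "\<forall>\<^sub>F x in F. q x < e" by eventually_elim (use K in linarith)
qed

locale contracting_cocycle = haar_representation \<mu> \<pi>0 p
  for \<mu> :: "'g::{topological_group_add,t2_space,second_countable_topology} measure"
    and \<pi>0 :: "'g \<Rightarrow> 'v::{banach,second_countable_topology} \<Rightarrow> 'v" and p +
  fixes \<xi> :: 'g and b :: "'g \<Rightarrow> 'g \<Rightarrow> 'v"
  assumes contracting: "contracting \<mu> p \<pi>0 \<xi>" and cocycle: "b \<in> Z1 \<mu> p \<pi>0"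
begin

lemma b_Lp: "b g \<in> Lp \<mu> p"
  using cocycle unfolding Z1_def by blast

lemma b_measurable[measurable]: "b g \<in> borel_measurable \<mu>"
  using b_Lp by (simp add: Lp_iff_Lp_pow)

lemma b_continuous: "((\<lambda>g. Lp_norm \<mu> p (\<lambda>x. b g x - b g0 x)) \<longlongrightarrow> 0) (at g0)"
  using cocycle unfolding Z1_def by blast

lemma b_cocycle: "AE x in \<mu>. b (g + h) x = b g x + pi_p \<pi>0 g (b h) x"
  using cocycle unfolding Z1_def by blast

lemma b_zero: "AE x in \<mu>. b 0 x = 0"
  using b_cocycle[of 0 0] by eventually_elim (simp add: pi_p_zero)

definition n0 :: nat where "n0 = (SOME n. Lp_opnorm \<mu> p \<pi>0 (gpow \<xi> n) < 1/4)"

definition \<gamma> :: 'g where "\<gamma> = gpow \<xi> n0"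

text \<open>Contraction ratio of \<open>\<pi>(\<gamma>)\<close> on \<open>\<integral>\<parallel>\<cdot>\<parallel>\<^sup>p\<close>; the factor \<open>1/4\<close> makes \<open>2\<^sup>p \<delta> < 1\<close>,
  which absorbs the constant of the quasi-triangle inequality.\<close>

definition \<delta> :: real where "\<delta> = (1/4) powr p"

lemma opnorm_\<gamma>: "Lp_opnorm \<mu> p \<pi>0 \<gamma> < 1/4"
proof -
  have "eventually (\<lambda>n. Lp_opnorm \<mu> p \<pi>0 (gpow \<xi> n) < 1/4) sequentially"
    using contracting unfolding contracting_def by (rule order_tendstoD) simp
  then obtain n where "Lp_opnorm \<mu> p \<pi>0 (gpow \<xi> n) < 1/4" by (auto simp: eventually_sequentially)
  then show ?thesis unfolding \<gamma>_def n0_def by (rule someI)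
qed

lemma \<xi>_commute_gpow_\<gamma>: "\<xi> + gpow \<gamma> k = gpow \<gamma> k + \<xi>"
  by (simp add: \<gamma>_def gpow_gpow gpow_commute)

lemma \<delta>_nonneg: "\<delta> \<ge> 0"
  by (simp add: \<delta>_def)

lemma two_powr_\<delta>_less_1: "2 powr p * \<delta> < 1"
proof -
  have "2 powr p * \<delta> = (1/2) powr p" unfolding \<delta>_def by (simp add: powr_mult[symmetric])
  also have "\<dots> < (1/2) powr 0" using p_pos by (intro powr_less_mono') auto
  finally show ?thesis by simp
qed

lemma \<delta>_less_1: "\<delta> < 1"
proof -
  have "1 \<le> (2::real) powr p" using p_pos by (simp add: ge_one_powr_ge_zero)
  then have "\<delta> \<le> 2 powr p * \<delta>" using mult_right_mono[OF _ \<delta>_nonneg] by fastforce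
  then show ?thesis using two_powr_\<delta>_less_1 by simp
qed

lemma Lp_pow_pi_p_\<gamma>_le:
  assumes h: "h \<in> Lp \<mu> p"
  shows "Lp_pow \<mu> p (pi_p \<pi>0 \<gamma> h) \<le> ennreal \<delta> * Lp_pow \<mu> p h"
proof -
  have "Lp_norm \<mu> p (pi_p \<pi>0 \<gamma> h) \<le> Lp_opnorm \<mu> p \<pi>0 \<gamma> * Lp_norm \<mu> p h"
    by (rule Lp_norm_pi_p_le_opnorm[OF h])
  also have "\<dots> \<le> 1/4 * Lp_norm \<mu> p h"
    using opnorm_\<gamma> Lp_norm_nonneg by (intro mult_right_mono) auto
  finally have "Lp_norm \<mu> p (pi_p \<pi>0 \<gamma> h) powr p \<le> (1/4 * Lp_norm \<mu> p h) powr p"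
    using p_pos Lp_norm_nonneg by (intro powr_mono2) auto
  also have "\<dots> = \<delta> * Lp_norm \<mu> p h powr p"
    unfolding \<delta>_def using Lp_norm_nonneg[of \<mu> p h] by (simp add: powr_divide)
  finally have "enn2real (Lp_pow \<mu> p (pi_p \<pi>0 \<gamma> h)) \<le> \<delta> * enn2real (Lp_pow \<mu> p h)"
    using h pi_p_Lp[OF h] by (simp add: Lp_norm_powr[OF p_pos])
  then have "ennreal (enn2real (Lp_pow \<mu> p (pi_p \<pi>0 \<gamma> h))) \<le> ennreal (\<delta> * enn2real (Lp_pow \<mu> p h))"
    by (rule ennreal_leI)
  then show ?thesis
    using ennreal_enn2real_Lp_pow[OF h] ennreal_enn2real_Lp_pow[OF pi_p_Lp[OF h]] \<delta>_nonneg by (simp add: ennreal_mult)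
qed

lemma Lp_pow_pi_p_gpow_\<gamma>_le:
  assumes h: "h \<in> Lp \<mu> p"
  shows "Lp_pow \<mu> p (pi_p \<pi>0 (gpow \<gamma> k) h) \<le> ennreal (\<delta> ^ k) * Lp_pow \<mu> p h"
proof (induction k)
  case 0
  then show ?case by (simp add: pi_p_zero)
next
  case (Suc k)
  have "Lp_pow \<mu> p (pi_p \<pi>0 (gpow \<gamma> (Suc k)) h) \<le> ennreal \<delta> * Lp_pow \<mu> p (pi_p \<pi>0 (gpow \<gamma> k) h)"
    using Lp_pow_pi_p_\<gamma>_le[OF pi_p_Lp[OF h]] by (simp add: gpow_Suc pi_p_compose)
  also have "\<dots> \<le> ennreal \<delta> * (ennreal (\<delta> ^ k) * Lp_pow \<mu> p h)"
    using Suc by (intro mult_left_mono) auto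
  also have "\<dots> = ennreal (\<delta> ^ Suc k) * Lp_pow \<mu> p h"
    using \<delta>_nonneg by (simp add: ennreal_mult mult.assoc)
  finally show ?case .
qed

definition series_term :: "nat \<Rightarrow> 'g \<Rightarrow> 'v" where
  "series_term k = pi_p \<pi>0 (gpow \<gamma> k) (b \<gamma>)"

definition partial_sum :: "nat \<Rightarrow> 'g \<Rightarrow> 'v" where
  "partial_sum K x = (\<Sum>k<K. series_term k x)"

definition b_lim :: "'g \<Rightarrow> 'v" where
  "b_lim x = (\<Sum>k. series_term k x)"

definition tail :: "nat \<Rightarrow> 'g \<Rightarrow> 'v" where
  "tail K x = b_lim x - partial_sum K x"

definition tail_bound :: "nat \<Rightarrow> real" where
  "tail_bound K = 2 powr p * (enn2real (Lp_pow \<mu> p (b \<gamma>)) * \<delta> ^ K / (1 - 2 powr p * \<delta>))"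

lemma series_term_Lp: "series_term k \<in> Lp \<mu> p"
  unfolding series_term_def by (intro pi_p_Lp b_Lp)

lemma series_term_measurable[measurable]: "series_term k \<in> borel_measurable \<mu>"
  using series_term_Lp by (simp add: Lp_iff_Lp_pow)

lemma Lp_pow_series_term_le: "Lp_pow \<mu> p (series_term k) \<le> ennreal (enn2real (Lp_pow \<mu> p (b \<gamma>)) * \<delta> ^ k)"
proof -
  have "Lp_pow \<mu> p (pi_p \<pi>0 (gpow \<gamma> k) (b \<gamma>)) \<le> ennreal (\<delta> ^ k) * Lp_pow \<mu> p (b \<gamma>)"
    by (rule Lp_pow_pi_p_gpow_\<gamma>_le[OF b_Lp])
  also have "\<dots> = ennreal (enn2real (Lp_pow \<mu> p (b \<gamma>)) * \<delta> ^ k)"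
    using ennreal_enn2real_Lp_pow[OF b_Lp, of \<gamma>] \<delta>_nonneg by (metis ennreal_mult' enn2real_nonneg mult.commute)
  finally show ?thesis unfolding series_term_def .
qed

lemma partial_sum_measurable[measurable]: "partial_sum K \<in> borel_measurable \<mu>"
  unfolding partial_sum_def by measurable

lemma b_lim_measurable[measurable]: "b_lim \<in> borel_measurable \<mu>"
  unfolding b_lim_def by measurable

lemma tail_measurable[measurable]: "tail K \<in> borel_measurable \<mu>"
  unfolding tail_def by measurable

lemma Lp_pow_tail_le: "Lp_pow \<mu> p (tail K) \<le> ennreal (tail_bound K)"
  using Lp_pow_series_tail_le[OF p_pos series_term_measurable Lp_pow_series_term_le _ \<delta>_nonneg
      two_powr_\<delta>_less_1, of K]
  unfolding tail_def b_lim_def partial_sum_def tail_bound_def by simp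

lemma tail_bound_nonneg: "tail_bound K \<ge> 0"
  unfolding tail_bound_def using \<delta>_nonneg two_powr_\<delta>_less_1 by simp

lemma tail_bound_tendsto_0: "tail_bound \<longlonglongrightarrow> 0"
proof -
  have "tail_bound \<longlonglongrightarrow> 2 powr p * (enn2real (Lp_pow \<mu> p (b \<gamma>)) * 0 / (1 - 2 powr p * \<delta>))"
    unfolding tail_bound_def
    by (intro tendsto_intros) (use two_powr_\<delta>_less_1 \<delta>_nonneg \<delta>_less_1 in auto)
  then show ?thesis by simp
qed

lemma tail_Lp: "tail K \<in> Lp \<mu> p"
  using Lp_pow_tail_le[of K] by (simp add: Lp_iff_Lp_pow order_le_less_trans)

lemma b_lim_Lp: "b_lim \<in> Lp \<mu> p"
proof -
  have "tail 0 = b_lim" by (simp add: tail_def partial_sum_def fun_eq_iff)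
  then show ?thesis using tail_Lp[of 0] by simp
qed

text \<open>By the cocycle identity the partial sums are \<open>b(\<gamma>\<^sup>K)\<close>, so \<open>b_lim\<close> is their \<open>L\<^sup>p\<close>-limit.\<close>

lemma pi_p_series_term:
  "AE x in \<mu>. pi_p \<pi>0 g (series_term k) x = b (g + gpow \<gamma> (Suc k)) x - b (g + gpow \<gamma> k) x"
proof -
  have "pi_p \<pi>0 g (series_term k) = pi_p \<pi>0 (g + gpow \<gamma> k) (b \<gamma>)"
    unfolding series_term_def by (simp add: pi_p_compose)
  moreover have "g + gpow \<gamma> (Suc k) = (g + gpow \<gamma> k) + \<gamma>" by (simp add: gpow_Suc_right add.assoc)
  ultimately show ?thesis using b_cocycle[of "g + gpow \<gamma> k" \<gamma>] by (auto elim!: eventually_mono)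
qed

lemma pi_p_partial_sum: "AE x in \<mu>. pi_p \<pi>0 g (partial_sum K) x = b (g + gpow \<gamma> K) x - b g x"
proof -
  have "AE x in \<mu>. \<forall>k. pi_p \<pi>0 g (series_term k) x = b (g + gpow \<gamma> (Suc k)) x - b (g + gpow \<gamma> k) x"
    using pi_p_series_term by (simp add: AE_all_countable)
  then show ?thesis
  proof eventually_elim
    case (elim x)
    have "pi_p \<pi>0 g (partial_sum K) x = (\<Sum>k<K. b (g + gpow \<gamma> (Suc k)) x - b (g + gpow \<gamma> k) x)"
      unfolding partial_sum_def pi_p_sum using elim by simp
    also have "\<dots> = b (g + gpow \<gamma> K) x - b g x"
      using sum_lessThan_telescope[of "\<lambda>k. b (g + gpow \<gamma> k) x" K] by simp
    finally show ?case .
  qed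
qed

lemma partial_sum_eq: "AE x in \<mu>. partial_sum K x = b (gpow \<gamma> K) x"
  using pi_p_partial_sum[of 0 K] b_zero by eventually_elim (simp add: pi_p_zero)

definition c :: "'g \<Rightarrow> 'g \<Rightarrow> 'v" where
  "c g x = b g x - b_lim x + pi_p \<pi>0 g b_lim x"

lemma b_minus_c_coboundary: "(\<lambda>g x. b g x - c g x) \<in> B1 \<mu> p \<pi>0"
  unfolding B1_def using b_lim_Lp by (auto simp: c_def)

lemma c_Lp: "c g \<in> Lp \<mu> p"
  using Lp_add[OF p_pos Lp_diff[OF p_pos b_Lp b_lim_Lp] pi_p_Lp[OF b_lim_Lp]]
  unfolding c_def[abs_def] by simp

lemma c_measurable[measurable]: "c g \<in> borel_measurable \<mu>"
  using c_Lp by (simp add: Lp_iff_Lp_pow)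

lemma c_cocycle: "AE x in \<mu>. c (g + h) x = c g x + pi_p \<pi>0 g (c h) x"
proof -
  have pi_p_c: "pi_p \<pi>0 g (c h) x = pi_p \<pi>0 g (b h) x - pi_p \<pi>0 g b_lim x + pi_p \<pi>0 (g + h) b_lim x" for x
    unfolding c_def pi_p_add pi_p_diff by (simp add: pi_p_compose[symmetric])
  show ?thesis using b_cocycle[of g h] by eventually_elim (simp add: c_def pi_p_c)
qed

lemma c_zero: "AE x in \<mu>. c 0 x = 0"
  using b_zero by eventually_elim (simp add: c_def pi_p_zero)

lemma c_decompose:
  "AE x in \<mu>. c g x = (b (g + gpow \<gamma> K) x - b (gpow \<gamma> K) x) + (pi_p \<pi>0 g (tail K) x - tail K x)"
proof -
  have pi_p_b_lim: "pi_p \<pi>0 g b_lim x = pi_p \<pi>0 g (tail K) x + pi_p \<pi>0 g (partial_sum K) x" for x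
    using pi_p_add[of g "tail K" "partial_sum K" x] by (simp add: tail_def)
  show ?thesis using pi_p_partial_sum[of g K] partial_sum_eq[of K]
    by eventually_elim (simp add: c_def pi_p_b_lim tail_def algebra_simps)
qed

lemma Lp_pow_c_diff_le:
  assumes C: "C \<ge> 0" "\<And>f. f \<in> borel_measurable \<mu> \<Longrightarrow> Lp_pow \<mu> p (pi_p \<pi>0 g f) \<le> ennreal C * Lp_pow \<mu> p f"
    and C0: "C0 \<ge> 0" "\<And>f. f \<in> borel_measurable \<mu> \<Longrightarrow> Lp_pow \<mu> p (pi_p \<pi>0 g0 f) \<le> ennreal C0 * Lp_pow \<mu> p f"
  shows "Lp_pow \<mu> p (\<lambda>x. c g x - c g0 x)
    \<le> ennreal (2 powr p) * (Lp_pow \<mu> p (\<lambda>x. b (g + gpow \<gamma> K) x - b (g0 + gpow \<gamma> K) x)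
        + ennreal (2 powr p * (C + C0) * tail_bound K))"
proof -
  define D where "D x = b (g + gpow \<gamma> K) x - b (g0 + gpow \<gamma> K) x" for x
  define E where "E x = pi_p \<pi>0 g (tail K) x - pi_p \<pi>0 g0 (tail K) x" for x
  have [measurable]: "D \<in> borel_measurable \<mu>" "E \<in> borel_measurable \<mu>"
    unfolding D_def E_def by measurable
  have "AE x in \<mu>. c g x - c g0 x = D x + E x"
    using c_decompose[of g K] c_decompose[of g0 K]
  proof eventually_elim
    case (elim x)
    show ?case unfolding elim D_def E_def by (simp add: algebra_simps)
  qed
  then have "Lp_pow \<mu> p (\<lambda>x. c g x - c g0 x) = Lp_pow \<mu> p (\<lambda>x. D x + E x)"
    by (rule Lp_pow_cong_AE)
  also have "\<dots> \<le> ennreal (2 powr p) * (Lp_pow \<mu> p D + Lp_pow \<mu> p E)"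
    by (rule Lp_pow_add_le[OF p_pos]) measurable
  also have "Lp_pow \<mu> p E \<le> ennreal (2 powr p) * (ennreal C * ennreal (tail_bound K) + ennreal C0 * ennreal (tail_bound K))"
    unfolding E_def
    by (rule order_trans[OF Lp_pow_diff_le[OF p_pos]], measurable)
      (intro mult_left_mono add_mono order_trans[OF C(2)] order_trans[OF C0(2)] mult_left_mono Lp_pow_tail_le;
        simp)
  also have "\<dots> = ennreal (2 powr p * (C + C0) * tail_bound K)"
    using C(1) C0(1) tail_bound_nonneg[of K]
    by (simp add: ennreal_mult[symmetric] ennreal_plus[symmetric] algebra_simps del: ennreal_plus)
  finally show ?thesis by (simp add: D_def mult_left_mono)
qed

lemma c_\<xi>: "AE x in \<mu>. c \<xi> x = 0"
proof -
  obtain C where C: "C \<ge> 0"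
    "\<And>f. f \<in> borel_measurable \<mu> \<Longrightarrow> Lp_pow \<mu> p (pi_p \<pi>0 \<xi> f) \<le> ennreal C * Lp_pow \<mu> p f"
    using Lp_pow_pi_p_le by blast
  define Q where "Q = enn2real (Lp_pow \<mu> p (b \<xi>))"
  define X where "X K = 2 powr p * (\<delta> ^ K * Q + 2 powr p * (C + 1) * tail_bound K)" for K
  have "Lp_pow \<mu> p (c \<xi>) \<le> ennreal (X K)" for K
  proof -
    have "AE x in \<mu>. b (\<xi> + gpow \<gamma> K) x - b (0 + gpow \<gamma> K) x = pi_p \<pi>0 (gpow \<gamma> K) (b \<xi>) x"
      using b_cocycle[of "gpow \<gamma> K" \<xi>] by eventually_elim (simp add: \<xi>_commute_gpow_\<gamma>)
    then have D: "Lp_pow \<mu> p (\<lambda>x. b (\<xi> + gpow \<gamma> K) x - b (0 + gpow \<gamma> K) x) \<le> ennreal (\<delta> ^ K) * ennreal Q"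
      using Lp_pow_pi_p_gpow_\<gamma>_le[OF b_Lp[of \<xi>], of K] ennreal_enn2real_Lp_pow[OF b_Lp, of \<xi>]
      by (simp add: Lp_pow_cong_AE Q_def)
    have "Lp_pow \<mu> p (c \<xi>) = Lp_pow \<mu> p (\<lambda>x. c \<xi> x - c 0 x)"
      using c_zero by (intro Lp_pow_cong_AE) (auto elim: eventually_mono)
    also have "\<dots> \<le> ennreal (2 powr p) * (Lp_pow \<mu> p (\<lambda>x. b (\<xi> + gpow \<gamma> K) x - b (0 + gpow \<gamma> K) x)
        + ennreal (2 powr p * (C + 1) * tail_bound K))"
      by (rule Lp_pow_c_diff_le[OF C]) (simp_all add: pi_p_zero)
    also have "\<dots> \<le> ennreal (2 powr p) * (ennreal (\<delta> ^ K) * ennreal Q + ennreal (2 powr p * (C + 1) * tail_bound K))"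
      using D by (intro mult_left_mono add_right_mono) auto
    also have "\<dots> = ennreal (X K)" unfolding X_def using C(1) tail_bound_nonneg[of K] \<delta>_nonneg
      by (simp add: Q_def ennreal_mult[symmetric] ennreal_plus[symmetric] del: ennreal_plus)
    finally show ?thesis .
  qed
  moreover have "X \<longlonglongrightarrow> 2 powr p * (0 * Q + 2 powr p * (C + 1) * 0)"
    unfolding X_def using \<delta>_nonneg \<delta>_less_1
    by (intro tendsto_intros tail_bound_tendsto_0 LIMSEQ_power_zero) auto
  then have "(\<lambda>K. ennreal (X K)) \<longlonglongrightarrow> ennreal 0" by (intro tendsto_ennrealI) simp
  ultimately have "Lp_pow \<mu> p (c \<xi>) \<le> ennreal 0" by (intro LIMSEQ_le_const) auto
  then show ?thesis by (intro AE_eq_0_if_Lp_pow_eq_0[OF p_pos c_measurable]) simp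
qed

lemma b_shift_continuous: "((\<lambda>g. Lp_norm \<mu> p (\<lambda>x. b (g + t) x - b (g0 + t) x)) \<longlongrightarrow> 0) (at g0)"
proof -
  have "filterlim (\<lambda>g. g + t) (at (g0 + t)) (at g0)"
    by (auto simp: filterlim_at eventually_at_filter intro!: tendsto_intros)
  from filterlim_compose[OF b_continuous[of "g0 + t"] this] show ?thesis by simp
qed

lemma Lp_norm_c_diff_powr_le:
  assumes C: "C \<ge> 0" "\<And>f. f \<in> borel_measurable \<mu> \<Longrightarrow> Lp_pow \<mu> p (pi_p \<pi>0 g f) \<le> ennreal C * Lp_pow \<mu> p f"
    and C0: "C0 \<ge> 0" "\<And>f. f \<in> borel_measurable \<mu> \<Longrightarrow> Lp_pow \<mu> p (pi_p \<pi>0 g0 f) \<le> ennreal C0 * Lp_pow \<mu> p f"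
  shows "Lp_norm \<mu> p (\<lambda>x. c g x - c g0 x) powr p
    \<le> 2 powr p * (Lp_norm \<mu> p (\<lambda>x. b (g + gpow \<gamma> K) x - b (g0 + gpow \<gamma> K) x) powr p
        + 2 powr p * (C + C0) * tail_bound K)"
proof -
  let ?D = "\<lambda>x. b (g + gpow \<gamma> K) x - b (g0 + gpow \<gamma> K) x"
  have D: "?D \<in> Lp \<mu> p" by (intro Lp_diff p_pos b_Lp)
  have "Lp_pow \<mu> p (\<lambda>x. c g x - c g0 x)
      \<le> ennreal (2 powr p) * (Lp_pow \<mu> p ?D + ennreal (2 powr p * (C + C0) * tail_bound K))"
    by (rule Lp_pow_c_diff_le[OF C C0])
  also have "Lp_pow \<mu> p ?D = ennreal (Lp_norm \<mu> p ?D powr p)"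
    by (subst Lp_norm_powr[OF p_pos D]) (rule ennreal_enn2real_Lp_pow[OF D])
  also have "ennreal (2 powr p) * (ennreal (Lp_norm \<mu> p ?D powr p) + ennreal (2 powr p * (C + C0) * tail_bound K))
      = ennreal (2 powr p * (Lp_norm \<mu> p ?D powr p + 2 powr p * (C + C0) * tail_bound K))"
    using C(1) C0(1) tail_bound_nonneg[of K]
    by (simp add: ennreal_mult[symmetric] ennreal_plus[symmetric] del: ennreal_plus)
  finally show ?thesis
    unfolding Lp_norm_powr[OF p_pos Lp_diff[OF p_pos c_Lp c_Lp]]
    by (rule enn2real_leI[rotated]) (use C(1) C0(1) tail_bound_nonneg[of K] in simp)
qed

lemma c_continuous: "((\<lambda>g. Lp_norm \<mu> p (\<lambda>x. c g x - c g0 x)) \<longlongrightarrow> 0) (at g0)"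
proof -
  obtain W C where W: "open W" "g0 \<in> W" and C: "C \<ge> 0"
    "\<And>g f. g \<in> W \<Longrightarrow> f \<in> borel_measurable \<mu> \<Longrightarrow> Lp_pow \<mu> p (pi_p \<pi>0 g f) \<le> ennreal C * Lp_pow \<mu> p f"
    using Lp_pow_pi_p_local_bound[of g0] by blast
  define q where "q g = Lp_norm \<mu> p (\<lambda>x. c g x - c g0 x) powr p" for g
  define \<alpha> where "\<alpha> K g = 2 powr p * Lp_norm \<mu> p (\<lambda>x. b (g + gpow \<gamma> K) x - b (g0 + gpow \<gamma> K) x) powr p"
    for K g
  define \<beta> where "\<beta> K = 2 powr p * (2 powr p * (C + C) * tail_bound K)" for K
  have bound: "q g \<le> \<alpha> K g + \<beta> K" if "g \<in> W" for K g
    using Lp_norm_c_diff_powr_le[OF C(1) C(2)[OF that] C(1) C(2)[OF W(2)], of K]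
    unfolding q_def \<alpha>_def \<beta>_def by (simp only: distrib_left)
  have approx: "\<forall>\<^sub>F g in at g0. q g \<le> \<alpha> K g + \<beta> K" for K
    by (rule eventually_mono[OF eventually_at_in_open'[OF W] bound])
  have \<alpha>_tendsto: "(\<alpha> K \<longlongrightarrow> 0) (at g0)" for K
  proof -
    have "((\<lambda>g. 2 powr p * Lp_norm \<mu> p (\<lambda>x. b (g + gpow \<gamma> K) x - b (g0 + gpow \<gamma> K) x) powr p)
        \<longlongrightarrow> 2 powr p * 0 powr p) (at g0)"
      using p_pos by (intro tendsto_intros tendsto_powr' b_shift_continuous) (auto simp: Lp_norm_nonneg)
    then show ?thesis using p_pos by (simp add: \<alpha>_def[abs_def])
  qed
  have \<beta>_tendsto: "\<beta> \<longlonglongrightarrow> 0"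
    using tendsto_mult_left[OF tendsto_mult_left[OF tail_bound_tendsto_0]] by (simp add: \<beta>_def[abs_def])
  have q_nonneg: "q g \<ge> 0" for g by (simp add: q_def)
  have "(q \<longlongrightarrow> 0) (at g0)"
    by (rule tendsto_0_if_approximable[OF q_nonneg approx \<alpha>_tendsto \<beta>_tendsto])
  then have "((\<lambda>g. q g powr (1/p)) \<longlongrightarrow> 0 powr (1/p)) (at g0)"
    using p_pos q_nonneg by (intro tendsto_powr' tendsto_const) auto
  then show ?thesis using p_pos by (simp add: q_def powr_powr Lp_norm_nonneg)
qed

lemma c_Z1: "c \<in> Z1 \<mu> p \<pi>0"
  unfolding Z1_def using c_Lp c_continuous c_cocycle by blast

end

theorem proposition2:
  fixes \<mu> :: "'g::{topological_group_add,t2_space,second_countable_topology} measure"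
    and \<pi>0 :: "'g \<Rightarrow> 'v::{banach,second_countable_topology} \<Rightarrow> 'v"
    and p :: real and \<xi> :: 'g and b :: "'g \<Rightarrow> 'g \<Rightarrow> 'v"
  assumes "lcsc_group TYPE('g)"
    and "left_haar_measure \<mu>"
    and "cont_rep \<pi>0"
    and "p > 1"
    and "contracting \<mu> p \<pi>0 \<xi>"
    and "b \<in> Z1 \<mu> p \<pi>0"
  shows "\<exists>c \<in> Z1 \<mu> p \<pi>0. (\<lambda>g x. b g x - c g x) \<in> B1 \<mu> p \<pi>0 \<and> (AE x in \<mu>. c \<xi> x = 0)"
proof -
  interpret contracting_cocycle \<mu> \<pi>0 p \<xi> b
    using assms by unfold_locales
  show ?thesis using c_Z1 b_minus_c_coboundary c_\<xi> by blast
qed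

end
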